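(* Let $n\ge 1$, $s\in\{1,\dots,n\}$, let $C\in\mathbb{R}^{n\times n}$ be symmetric positive definite, and let $0\le t\le\lambda_{\min}(C)$. For every $n\times n$ symmetric positive semidefinite matrix $X$, the concave envelope of $\Phi_s(\cdot\,;t)$ satisfies $$\widehat{\Phi}_s(X;t)=\psi_s\big(\lambda(X)+t\,\mathbb{I}_s\big).$$
   Context: $\lambda_{\min}(C)$ is the smallest eigenvalue of $C$. For a symmetric matrix $X$, $\lambda(X)=(\lambda_1(X),\dots,\lambda_n(X))$ is the vector of its eigenvalues in nonincreasing order. $\mathbb{I}_s\in\mathbb{R}^n$ is the vector whose first $s$ entries are $1$ and whose remaining entries are $0$. For a positive semidefinite $X$, $\Phi_s(X;t)=\sum_{i=1}^s\log(\lambda_i(X)+t)$ (natural log), and $\widehat{\Phi}_s(\cdot\,;t)$, the concave envelope, is the pointwise infimum of all concave functions $f$ on the cone of $n\times n$ positive semidefinite matrices with $f\ge\Phi_s(\cdot\,;t)$ there. For $y\in\mathbb{R}^n_+$ let $y^\downarrow_1\ge\dots\ge y^\downarrow_n$ be its entries sorted in nonincreasing order, with the convention $y^\downarrow_0=\infty$; there is a unique integer $k\in\{0,\dots,s-1\}$ with $y^\downarrow_k>\frac{1}{s-k}\sum_{i=k+1}^n y^\downarrow_i\ge y^\downarrow_{k+1}$, and $\psi_s(y)=\sum_{i=1}^k\log(y^\downarrow_i)+(s-k)\log\Big(\frac{1}{s-k}\sum_{i=k+1}^n y^\downarrow_i\Big)$. *)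

theory Defs
  imports "Jordan_Normal_Form.Char_Poly" "HOL-Computational_Algebra.Polynomial" "HOL-Library.Extended_Real"
begin

definition sym_mat :: "nat \<Rightarrow> real mat \<Rightarrow> bool" where
  "sym_mat n X \<longleftrightarrow> X \<in> carrier_mat n n \<and> transpose_mat X = X"

definition psd_mat :: "nat \<Rightarrow> real mat \<Rightarrow> bool" where
  "psd_mat n X \<longleftrightarrow> sym_mat n X \<and> (\<forall>v \<in> carrier_vec n. 0 \<le> v \<bullet> (X *\<^sub>v v))"

definition pd_mat :: "nat \<Rightarrow> real mat \<Rightarrow> bool" where
  "pd_mat n X \<longleftrightarrow> sym_mat n X \<and> (\<forall>v \<in> carrier_vec n. v \<noteq> 0\<^sub>v n \<longrightarrow> 0 < v \<bullet> (X *\<^sub>v v))"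

definition eigvals :: "real mat \<Rightarrow> real list" where
  "eigvals X = rev (sorted_list_of_multiset (proots (char_poly X)))"

definition lambda_min :: "real mat \<Rightarrow> real" where
  "lambda_min X = Min (set_mset (proots (char_poly X)))"

definition elog :: "real \<Rightarrow> ereal" where
  "elog x = (if 0 < x then ereal (ln x) else -\<infinity>)"

definition Phi :: "nat \<Rightarrow> real mat \<Rightarrow> real \<Rightarrow> ereal" where
  "Phi s X t = (\<Sum>i<s. elog (eigvals X ! i + t))"

text \<open>Concavity on the PSD cone (convexity of the hypograph, for extended-real-valued f).\<close>
definition concave_on_psd :: "nat \<Rightarrow> (real mat \<Rightarrow> ereal) \<Rightarrow> bool" where
  "concave_on_psd n f \<longleftrightarrow>
     (\<forall>X Y a r1 r2. psd_mat n X \<and> psd_mat n Y \<and> 0 \<le> a \<and> a \<le> 1 \<and>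
        ereal r1 \<le> f X \<and> ereal r2 \<le> f Y \<longrightarrow>
        ereal (a * r1 + (1 - a) * r2) \<le> f (a \<cdot>\<^sub>m X + (1 - a) \<cdot>\<^sub>m Y))"

definition Phi_hat :: "nat \<Rightarrow> nat \<Rightarrow> real mat \<Rightarrow> real \<Rightarrow> ereal" where
  "Phi_hat n s X t = Inf {f X | f. concave_on_psd n f \<and>
                          (\<forall>Y. psd_mat n Y \<longrightarrow> Phi s Y t \<le> f Y)}"

definition indic_vec :: "nat \<Rightarrow> nat \<Rightarrow> real list" where
  "indic_vec n s = map (\<lambda>i. if i < s then 1 else 0) [0..<n]"

text \<open>psi_s(y) for y in R^n_+ given as a list; yd i = y^down_i (1-indexed), yd 0 = infinity.\<close>
definition psi :: "nat \<Rightarrow> real list \<Rightarrow> ereal" where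
  "psi s y =
    (let ys = rev (sort y); n = length y;
         yd = (\<lambda>i::nat. if i = 0 then \<infinity> else ereal (ys ! (i - 1)));
         avg = (\<lambda>k::nat. (\<Sum>i = k..<n. ys ! i) / real (s - k));
         k = (THE k. k < s \<and> ereal (avg k) < yd k \<and> ys ! k \<le> avg k)
     in (\<Sum>i<k. elog (ys ! i)) + ereal (real (s - k)) * elog (avg k))"

end

(* Diagonalise X = U diag(mu) U^T with mu = lambda(X) nonincreasing, and let y = mu + t I_s.

   Upper bound: for nondecreasing positive weights c, the function
     Y |-> sum_i c_i <u_i, Y u_i> + sum_{i<s} phi_t(c_i),
   with phi_t the concave conjugate of ln(_ + t), is affine in Y. It majorises Phi_s(_; t) by the
   Fenchel inequality ln(l + t) <= c l + phi_t(c) together with a rearrangement inequality for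
   the doubly stochastic matrix of squared overlaps of two eigenbases. Choosing c_i = 1/y_i for
   i < k and c_i = 1/(water level) otherwise gives the value psi_s(y) at X, so the envelope is at
   most psi_s(y).

   Lower bound: keep the first k eigenvalues of X and write the others as (level - t) q_i. The
   vector q lies in a hypersimplex, whose vertices give matrices with eigenvalues mu_1, ..., mu_k,
   s - k copies of level - t, and zeros; Phi_s equals psi_s(y) at each of them. Any concave
   majorant is therefore at least psi_s(y) at X, a convex combination of them. *)

theory Submission
  imports Defs "HOL-Combinatorics.Permutations"
begin

section \<open>Orthonormal matrices and diagonalised matrices\<close>

definition orthonormal_mat :: "nat \<Rightarrow> 'a::comm_ring_1 mat \<Rightarrow> bool" where
  "orthonormal_mat n U \<longleftrightarrow> U \<in> carrier_mat n n \<and> transpose_mat U * U = 1\<^sub>m n"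

abbreviation spectral_mat :: "nat \<Rightarrow> real mat \<Rightarrow> (nat \<Rightarrow> real) \<Rightarrow> real mat" where
  "spectral_mat n U d \<equiv> U * mat_diag n d * transpose_mat U"

lemma dim_mat_diag [simp]: "dim_row (mat_diag n f) = n" "dim_col (mat_diag n f) = n"
  by (simp_all add: mat_diag_def)

lemma index_mult_mat_sum:
  fixes A B :: "'a::comm_semiring_0 mat"
  assumes "A \<in> carrier_mat n m" "B \<in> carrier_mat m p" "i < n" "j < p"
  shows "(A * B) $$ (i,j) = (\<Sum>l<m. A $$ (i,l) * B $$ (l,j))"
  using assms by (simp add: scalar_prod_def atLeast0LessThan)

lemma index_mult_mat_vec_sum:
  fixes A :: "'a::comm_semiring_0 mat"
  assumes "A \<in> carrier_mat n m" "v \<in> carrier_vec m" "i < n"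
  shows "(A *\<^sub>v v) $ i = (\<Sum>l<m. A $$ (i,l) * v $ l)"
  using assms by (simp add: scalar_prod_def atLeast0LessThan)

lemma quadratic_form_sum:
  fixes M :: "'a::comm_semiring_0 mat"
  assumes "M \<in> carrier_mat n n" "v \<in> carrier_vec n"
  shows "v \<bullet> (M *\<^sub>v v) = (\<Sum>a<n. \<Sum>b<n. v $ a * M $$ (a,b) * v $ b)"
  using assms by (simp add: scalar_prod_def atLeast0LessThan sum_distrib_left mult.assoc)

lemma quadratic_form_lincomb:
  fixes X Y :: "'a::comm_ring_1 mat"
  assumes "X \<in> carrier_mat n n" "Y \<in> carrier_mat n n" "v \<in> carrier_vec n"
  shows "v \<bullet> ((a \<cdot>\<^sub>m X + b \<cdot>\<^sub>m Y) *\<^sub>v v) = a * (v \<bullet> (X *\<^sub>v v)) + b * (v \<bullet> (Y *\<^sub>v v))"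
  using assms
  by (simp add: quadratic_form_sum[of _ n] sum_distrib_left sum.distrib[symmetric] algebra_simps)

lemma orthonormal_mat_carrier: "orthonormal_mat n U \<Longrightarrow> U \<in> carrier_mat n n"
  by (simp add: orthonormal_mat_def)

lemma orthonormal_mat_cols:
  assumes "orthonormal_mat n U" "i < n" "j < n"
  shows "(\<Sum>k<n. U $$ (k,i) * U $$ (k,j)) = (if i = j then 1 else 0)"
proof -
  have U: "U \<in> carrier_mat n n" and "transpose_mat U * U = 1\<^sub>m n"
    using assms(1) by (auto simp: orthonormal_mat_def)
  then show ?thesis
    using index_mult_mat_sum[of "transpose_mat U" n n U n i j] assms(2,3) by simp
qed

lemma orthonormal_mat_mult_transpose:
  fixes U :: "'a::field mat"
  shows "orthonormal_mat n U \<Longrightarrow> U * transpose_mat U = 1\<^sub>m n"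
  unfolding orthonormal_mat_def using mat_mult_left_right_inverse[of "transpose_mat U" n U] by auto

lemma orthonormal_mat_rows:
  fixes U :: "'a::field mat"
  assumes "orthonormal_mat n U" "i < n" "j < n"
  shows "(\<Sum>k<n. U $$ (i,k) * U $$ (j,k)) = (if i = j then 1 else 0)"
  using index_mult_mat_sum[of U n n "transpose_mat U" n i j] assms
    orthonormal_mat_mult_transpose[OF assms(1)] by (simp add: orthonormal_mat_def)

lemma orthonormal_matI:
  assumes U: "U \<in> carrier_mat n n"
    and cols: "\<And>i j. i < n \<Longrightarrow> j < n \<Longrightarrow> (\<Sum>k<n. U $$ (k,i) * U $$ (k,j)) = (if i = j then 1 else 0)"
  shows "orthonormal_mat n U"
  unfolding orthonormal_mat_def
  by (intro conjI U eq_matI) (use U cols index_mult_mat_sum[of "transpose_mat U" n n U n] in auto)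

lemma orthonormal_mat_mult:
  fixes U V :: "'a::comm_ring_1 mat"
  assumes U: "orthonormal_mat n U" and V: "orthonormal_mat n V"
  shows "orthonormal_mat n (U * V)"
proof -
  have Uc: "U \<in> carrier_mat n n" and Vc: "V \<in> carrier_mat n n"
    using U V by (auto simp: orthonormal_mat_def)
  have "transpose_mat (U * V) * (U * V) = transpose_mat V * (transpose_mat U * U) * V"
    using Uc Vc by (simp add: transpose_mult[OF Uc Vc] assoc_mult_mat[of _ n n _ n _ n])
  also have "\<dots> = 1\<^sub>m n"
    using U V Vc by (simp add: orthonormal_mat_def)
  finally show ?thesis
    using Uc Vc by (simp add: orthonormal_mat_def)
qed

lemma orthonormal_overlap_sum:
  fixes U V :: "'a::field mat"
  assumes U: "orthonormal_mat n U" and V: "orthonormal_mat n V" and i: "i < n"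
  shows "(\<Sum>k<n. (\<Sum>a<n. U $$ (a,i) * V $$ (a,k))\<^sup>2) = 1"
proof -
  have "(\<Sum>k<n. (\<Sum>a<n. U $$ (a,i) * V $$ (a,k))\<^sup>2) =
        (\<Sum>k<n. \<Sum>a<n. \<Sum>b<n. U $$ (a,i) * U $$ (b,i) * (V $$ (a,k) * V $$ (b,k)))"
    by (simp add: power2_eq_square sum_product mult_ac)
  also have "\<dots> = (\<Sum>a<n. \<Sum>b<n. \<Sum>k<n. U $$ (a,i) * U $$ (b,i) * (V $$ (a,k) * V $$ (b,k)))"
    by (subst sum.swap) (rule sum.cong[OF refl], rule sum.swap)
  also have "\<dots> = (\<Sum>a<n. \<Sum>b<n. if a = b then U $$ (a,i) * U $$ (b,i) else 0)"
    by (intro sum.cong refl) (simp add: orthonormal_mat_rows[OF V] flip: sum_distrib_left)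
  also have "\<dots> = (\<Sum>a<n. U $$ (a,i) * U $$ (a,i))"
    by simp
  also have "\<dots> = 1"
    using orthonormal_mat_cols[OF U i i] by simp
  finally show ?thesis .
qed

lemma spectral_mat_carrier: "U \<in> carrier_mat n n \<Longrightarrow> spectral_mat n U d \<in> carrier_mat n n"
  by (metis mat_diag_dim mult_carrier_mat transpose_carrier_mat)

lemma index_spectral_mat:
  assumes U: "U \<in> carrier_mat n n" and ij: "i < n" "j < n"
  shows "spectral_mat n U d $$ (i,j) = (\<Sum>k<n. U $$ (i,k) * d k * U $$ (j,k))"
proof -
  have "U * mat_diag n d \<in> carrier_mat n n" using U by simp
  then show ?thesis
    using assms
    by (simp add: index_mult_mat_sum[of _ n n _ n] mat_diag_mult_right[OF U] del: index_mult_mat(1))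
qed

lemma spectral_mat_cong:
  "(\<And>i. i < n \<Longrightarrow> d i = d' i) \<Longrightarrow> spectral_mat n U d = spectral_mat n U d'"
  by (rule arg_cong[where f = "\<lambda>D. U * D * transpose_mat U"]) (auto simp: mat_diag_def)

lemma spectral_mat_lincomb:
  assumes U: "U \<in> carrier_mat n n"
  shows "a \<cdot>\<^sub>m spectral_mat n U d1 + b \<cdot>\<^sub>m spectral_mat n U d2 =
         spectral_mat n U (\<lambda>i. a * d1 i + b * d2 i)"
  by (rule eq_matI)
     (use U in \<open>auto simp: index_spectral_mat sum_distrib_left sum.distrib[symmetric] algebra_simps
        simp del: index_mult_mat(1)\<close>)

lemma sym_mat_spectral_mat:
  assumes U: "U \<in> carrier_mat n n"
  shows "sym_mat n (spectral_mat n U d)"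
  unfolding sym_mat_def
  by (intro conjI spectral_mat_carrier[OF U] eq_matI)
     (use U in \<open>auto simp: index_spectral_mat mult_ac simp del: index_mult_mat(1)\<close>)

lemma quadratic_form_spectral_mat:
  assumes U: "U \<in> carrier_mat n n" and v: "v \<in> carrier_vec n"
  shows "v \<bullet> (spectral_mat n U d *\<^sub>v v) = (\<Sum>k<n. d k * (\<Sum>a<n. U $$ (a,k) * v $ a)\<^sup>2)"
proof -
  have "v \<bullet> (spectral_mat n U d *\<^sub>v v) =
      (\<Sum>a<n. \<Sum>b<n. v $ a * (\<Sum>k<n. U $$ (a,k) * d k * U $$ (b,k)) * v $ b)"
    using U v by (simp add: quadratic_form_sum[of _ n] index_spectral_mat spectral_mat_carrier
        del: index_mult_mat(1))
  also have "\<dots> = (\<Sum>a<n. \<Sum>b<n. \<Sum>k<n. d k * ((U $$ (a,k) * v $ a) * (U $$ (b,k) * v $ b)))"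
    by (simp add: sum_distrib_left sum_distrib_right mult_ac)
  also have "\<dots> = (\<Sum>k<n. \<Sum>a<n. \<Sum>b<n. d k * ((U $$ (a,k) * v $ a) * (U $$ (b,k) * v $ b)))"
    by (subst sum.swap, subst (2) sum.swap) simp
  also have "\<dots> = (\<Sum>k<n. d k * (\<Sum>a<n. U $$ (a,k) * v $ a)\<^sup>2)"
    by (simp add: power2_eq_square sum_distrib_left sum_distrib_right mult_ac)
  finally show ?thesis .
qed

lemma psd_mat_spectral_mat:
  assumes U: "U \<in> carrier_mat n n" and d: "\<And>k. k < n \<Longrightarrow> 0 \<le> d k"
  shows "psd_mat n (spectral_mat n U d)"
  unfolding psd_mat_def
  using sym_mat_spectral_mat[OF U] d by (auto simp: quadratic_form_spectral_mat[OF U] intro!: sum_nonneg)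

lemma quadratic_form_spectral_mat_col:
  assumes U: "orthonormal_mat n U" and i: "i < n"
  shows "col U i \<bullet> (spectral_mat n U d *\<^sub>v col U i) = d i"
proof -
  have Uc: "U \<in> carrier_mat n n" using U by (rule orthonormal_mat_carrier)
  have "col U i \<bullet> (spectral_mat n U d *\<^sub>v col U i) = (\<Sum>k<n. if k = i then d k else 0)"
    using Uc i unfolding quadratic_form_spectral_mat[OF Uc col_carrier_vec[OF i Uc]]
    by (intro sum.cong) (auto simp: orthonormal_mat_cols[OF U])
  with i show ?thesis by simp
qed

lemma psd_mat_spectral_mat_nonneg:
  assumes "psd_mat n (spectral_mat n U d)" "orthonormal_mat n U" "i < n"
  shows "0 \<le> d i"
proof -
  have "0 \<le> col U i \<bullet> (spectral_mat n U d *\<^sub>v col U i)"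
    using assms(1) col_carrier_vec[OF assms(3) orthonormal_mat_carrier[OF assms(2)]]
    unfolding psd_mat_def by blast
  then show ?thesis
    by (simp only: quadratic_form_spectral_mat_col[OF assms(2,3)])
qed

lemma proots_prod_list_linear: "proots (\<Prod>a\<leftarrow>ds. [:- a, 1:]) = mset (ds :: 'a::idom list)"
proof (induction ds)
  case (Cons a ds)
  have "proots (\<Prod>a\<leftarrow>a # ds. [:- a, 1:]) = proots ([:- a, 1:] * (\<Prod>a\<leftarrow>ds. [:- a, 1:]))"
    by simp
  also have "\<dots> = proots [:- a, 1:] + proots (\<Prod>a\<leftarrow>ds. [:- a, 1:])"
    by (rule proots_mult) (auto simp: prod_list_zero_iff)
  finally show ?case
    using Cons by simp
qed simp

lemma rev_sort_eq_self:
  fixes y :: "'a::linorder list"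
  assumes "\<And>i j. i \<le> j \<Longrightarrow> j < length y \<Longrightarrow> y ! j \<le> y ! i"
  shows "rev (sort y) = y"
proof -
  have "sorted (rev y)"
    unfolding sorted_iff_nth_mono using assms by (auto simp: rev_nth)
  then have "sort y = rev y"
    by (intro properties_for_sort) simp_all
  then show ?thesis
    by simp
qed

lemma eigvals_spectral_mat:
  assumes U: "orthonormal_mat n U"
  shows "eigvals (spectral_mat n U d) = rev (sort (map d [0..<n]))"
proof -
  have Uc: "U \<in> carrier_mat n n" using U by (rule orthonormal_mat_carrier)
  have "similar_mat (spectral_mat n U d) (mat_diag n d)"
    using U Uc orthonormal_mat_mult_transpose[OF U]
    by (intro similar_matI[of _ _ U "transpose_mat U" n]) (auto simp: orthonormal_mat_def)
  then have "char_poly (spectral_mat n U d) = (\<Prod>a\<leftarrow>diag_mat (mat_diag n d). [:- a, 1:])"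
    by (simp add: char_poly_similar char_poly_upper_triangular[of _ n] upper_triangular_def mat_diag_def)
  also have "diag_mat (mat_diag n d) = map d [0..<n]"
    by (auto simp: diag_mat_def mat_diag_def intro!: nth_equalityI)
  finally show ?thesis
    by (simp only: eigvals_def proots_prod_list_linear sorted_list_of_multiset_mset)
qed

lemma eigvals_spectral_mat_mset_cong:
  assumes "orthonormal_mat n U" "mset (map d [0..<n]) = mset (map d' [0..<n])"
  shows "eigvals (spectral_mat n U d) = eigvals (spectral_mat n U d')"
  using assms by (metis eigvals_spectral_mat sorted_list_of_multiset_mset)

lemma eigvals_spectral_mat_antimono:
  assumes "orthonormal_mat n U" "\<And>i j. i \<le> j \<Longrightarrow> j < n \<Longrightarrow> d j \<le> d i"
  shows "eigvals (spectral_mat n U d) = map d [0..<n]"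
  unfolding eigvals_spectral_mat[OF assms(1)] by (rule rev_sort_eq_self) (use assms(2) in auto)

section \<open>The spectral theorem for real symmetric matrices\<close>

lemma hermitian_form_real:
  fixes A :: "real mat" and w :: "complex vec"
  assumes symA: "\<And>i j. i < n \<Longrightarrow> j < n \<Longrightarrow> A $$ (j,i) = A $$ (i,j)"
  shows "Im (\<Sum>i<n. \<Sum>j<n. complex_of_real (A $$ (i,j)) * (cnj (w $ i) * w $ j)) = 0"
proof -
  define S where "S = (\<Sum>i<n. \<Sum>j<n. complex_of_real (A $$ (i,j)) * (cnj (w $ i) * w $ j))"
  have "cnj S = (\<Sum>j<n. \<Sum>i<n. complex_of_real (A $$ (i,j)) * (w $ i * cnj (w $ j)))"
    unfolding S_def by (subst sum.swap) (simp add: mult.commute)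
  also have "\<dots> = S"
    unfolding S_def by (intro sum.cong refl) (simp add: symA mult.commute)
  finally have "Im S = 0"
    by (metis cnj.simps(2) equal_neg_zero)
  then show ?thesis
    by (simp only: S_def)
qed

lemma sym_mat_has_real_eigenvalue:
  assumes A: "sym_mat n A" and n: "0 < n"
  shows "\<exists>e. eigenvalue A e"
proof -
  have Ac: "A \<in> carrier_mat n n" and At: "transpose_mat A = A"
    using A unfolding sym_mat_def by auto
  have symA: "A $$ (j,i) = A $$ (i,j)" if "i < n" "j < n" for i j
    using that by (metis At Ac carrier_matD index_transpose_mat(1))
  let ?B = "map_mat complex_of_real A"
  have Bc: "?B \<in> carrier_mat n n" using Ac by simp
  have "degree (char_poly ?B) = n"
    using degree_monic_char_poly[OF Bc] by simp
  then obtain z where "poly (char_poly ?B) z = 0"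
    using fundamental_theorem_of_algebra n by (metis constant_degree neq0_conv)
  then obtain w where w: "eigenvector ?B w z"
    using eigenvalue_root_char_poly[OF Bc] unfolding eigenvalue_def by blast
  then have wc: "w \<in> carrier_vec n" and w0: "w \<noteq> 0\<^sub>v n" and Bw: "?B *\<^sub>v w = z \<cdot>\<^sub>v w"
    using Bc unfolding eigenvector_def by auto
  \<comment> \<open>The Hermitian form \<open>w\<^sup>* B w\<close> equals \<open>z |w|\<^sup>2\<close> and is real, so \<open>z\<close> is real.\<close>
  define N where "N = (\<Sum>i<n. (cmod (w $ i))\<^sup>2)"
  have "(\<Sum>i<n. \<Sum>j<n. complex_of_real (A $$ (i,j)) * (cnj (w $ i) * w $ j)) =
      (\<Sum>i<n. cnj (w $ i) * (?B *\<^sub>v w) $ i)"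
    using Ac wc
    by (simp add: index_mult_mat_vec_sum[OF Bc wc] sum_distrib_left mult_ac del: index_mult_mat_vec)
  also have "\<dots> = z * complex_of_real N"
    unfolding Bw N_def using wc
    by (simp add: sum_distrib_left complex_norm_square mult_ac del: of_real_power)
  finally have "Im (z * complex_of_real N) = 0"
    using hermitian_form_real[of n A w, OF symA] by simp
  moreover obtain i where "i < n" "w $ i \<noteq> 0"
    using w0 wc by (metis eq_vecI carrier_vecD index_zero_vec)
  then have "0 < N"
    unfolding N_def by (intro sum_pos2[of _ i]) auto
  ultimately have "Im z = 0"
    by simp
  then have "complex_of_real (poly (char_poly A) (Re z)) = 0"
    using \<open>poly (char_poly ?B) z = 0\<close> of_real_hom.char_poly_hom[OF Ac]
    by (metis complex_is_Real_iff of_real_Re of_real_hom.poly_map_poly)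
  then show ?thesis
    using eigenvalue_root_char_poly[OF Ac] by auto
qed

lemma sym_mat_unit_eigenvector:
  assumes "sym_mat n A" "0 < n"
  obtains e x where "x \<in> carrier_vec n" "x \<bullet> x = 1" "A *\<^sub>v x = e \<cdot>\<^sub>v x"
proof -
  have Ac: "A \<in> carrier_mat n n"
    using assms(1) by (simp add: sym_mat_def)
  obtain e v where "eigenvector A v e"
    using sym_mat_has_real_eigenvalue[OF assms] unfolding eigenvalue_def by blast
  then have v: "v \<in> carrier_vec n" "v \<noteq> 0\<^sub>v n" and Av: "A *\<^sub>v v = e \<cdot>\<^sub>v v"
    using Ac unfolding eigenvector_def by auto
  have pos: "0 < v \<bullet> v"
    using conjugate_square_greater_0_vec[OF v(1)] v(2) by simp
  define x where "x = (1 / sqrt (v \<bullet> v)) \<cdot>\<^sub>v v"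
  have "x \<bullet> x = 1"
    using v pos by (simp add: x_def power2_eq_square[symmetric])
  moreover have "A *\<^sub>v x = e \<cdot>\<^sub>v x"
    using Ac v Av by (simp add: x_def mult_mat_vec smult_smult_assoc mult.commute)
  moreover have "x \<in> carrier_vec n"
    using v by (simp add: x_def)
  ultimately show ?thesis
    using that by blast
qed

lemma householder_orthonormal:
  fixes w :: "nat \<Rightarrow> real"
  assumes c: "c \<noteq> 0" and w_sq: "(\<Sum>k<n. (w k)\<^sup>2) = 2 * c"
  shows "orthonormal_mat n (mat n n (\<lambda>(i,j). (if i = j then 1 else 0) - w i * w j / c))"
    (is "orthonormal_mat n ?H")
proof (rule orthonormal_matI)
  fix i j assume ij: "i < n" "j < n"
  have "(\<Sum>k<n. ?H $$ (k,i) * ?H $$ (k,j)) =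
    (\<Sum>k<n. (if k = i then (if i = j then 1 else 0) else 0) - (if k = i then w k * w j / c else 0)
      - (if k = j then w k * w i / c else 0) + (w k)\<^sup>2 * (w i * w j / c\<^sup>2))"
    using ij c by (intro sum.cong) (auto simp: power2_eq_square field_simps)
  also have "\<dots> = (if i = j then 1 else 0) - 2 * (w i * w j / c) + (\<Sum>k<n. (w k)\<^sup>2) * (w i * w j / c\<^sup>2)"
    using ij by (simp add: sum.distrib sum_subtractf sum_distrib_right sum_divide_distrib)
  also have "\<dots> = (if i = j then 1 else 0)"
    using c by (simp only: w_sq) (simp add: power2_eq_square field_simps)
  finally show "(\<Sum>k<n. ?H $$ (k,i) * ?H $$ (k,j)) = (if i = j then 1 else 0)" .
qed simp

lemma householder_completion:
  fixes x :: "real vec"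
  assumes x: "x \<in> carrier_vec n" "x \<bullet> x = 1" and n: "0 < n"
  obtains H where "orthonormal_mat n H" "col H 0 = x"
proof (cases "x $ 0 = 1")
  case True
  have "(\<Sum>k<n. (x $ k)\<^sup>2) = (x $ 0)\<^sup>2 + (\<Sum>k\<in>{..<n}-{0}. (x $ k)\<^sup>2)"
    using n by (simp add: sum.remove[of "{..<n}" 0])
  then have "(\<Sum>k\<in>{..<n}-{0}. (x $ k)\<^sup>2) = 0"
    using True x by (simp add: scalar_prod_def atLeast0LessThan power2_eq_square)
  then have "x $ k = 0" if "k < n" "k \<noteq> 0" for k
    using that sum_nonneg_eq_0_iff[of "{..<n}-{0}" "\<lambda>k. (x $ k)\<^sup>2"] by auto
  then have "col (1\<^sub>m n) 0 = x"
    using True x n by (auto simp: unit_vec_def)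
  then show ?thesis
    by (intro that[of "1\<^sub>m n"]) (auto simp: orthonormal_mat_def)
next
  case False
  \<comment> \<open>Reflect \<open>e\<^sub>0\<close> to \<open>x\<close> in the hyperplane orthogonal to \<open>w = x - e\<^sub>0\<close>; here \<open>|w|\<^sup>2 = 2c\<close>.\<close>
  define c where "c = 1 - x $ 0"
  define w where "w k = x $ k - (if k = 0 then 1 else 0)" for k
  have c: "c \<noteq> 0" using False by (simp add: c_def)
  have "(w k)\<^sup>2 = (x $ k)\<^sup>2 - (if k = 0 then 2 * x $ 0 - 1 else 0)" for k
    by (simp add: w_def power2_eq_square algebra_simps)
  then have "(\<Sum>k<n. (w k)\<^sup>2) = (\<Sum>k<n. (x $ k)\<^sup>2) - (2 * x $ 0 - 1)"
    using n by (simp add: sum_subtractf)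
  also have "\<dots> = 2 * c"
    using x by (simp add: c_def scalar_prod_def atLeast0LessThan power2_eq_square)
  finally have "orthonormal_mat n (mat n n (\<lambda>(i,j). (if i = j then 1 else 0) - w i * w j / c))"
    using c by (intro householder_orthonormal)
  moreover have "col (mat n n (\<lambda>(i,j). (if i = j then 1 else 0) - w i * w j / c)) 0 = x"
    using n x c by (auto simp: w_def c_def field_simps)
  ultimately show ?thesis
    using that by blast
qed

lemma sym_mat_transpose_conj:
  assumes A: "sym_mat n A" and U: "U \<in> carrier_mat n n"
  shows "sym_mat n (transpose_mat U * A * U)"
proof -
  have Ac: "A \<in> carrier_mat n n" using A by (simp add: sym_mat_def)
  have "transpose_mat (transpose_mat U * A * U) = transpose_mat U * transpose_mat A * U"
    using Ac U by (simp add: transpose_mult[of _ n n _ n] assoc_mult_mat[of _ n n _ n _ n])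
  moreover have "transpose_mat U * A * U \<in> carrier_mat n n"
    using Ac U by (metis mult_carrier_mat transpose_carrier_mat)
  ultimately show ?thesis
    using A by (simp add: sym_mat_def)
qed

lemma deflate_eigenvector:
  fixes A H :: "'a::field mat"
  assumes H: "orthonormal_mat n H" and A: "A \<in> carrier_mat n n" and n: "0 < n"
    and eig: "A *\<^sub>v col H 0 = e \<cdot>\<^sub>v col H 0"
  shows "col (transpose_mat H * A * H) 0 = e \<cdot>\<^sub>v unit_vec n 0"
proof -
  have Hc: "H \<in> carrier_mat n n" using H by (rule orthonormal_mat_carrier)
  have "col (transpose_mat H * A * H) 0 = transpose_mat H *\<^sub>v (A *\<^sub>v col H 0)"
    using Hc A n by (simp add: assoc_mult_mat[of _ n n _ n _ n] col_mult2[of _ n n _ n] del: col_mult)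
  also have "\<dots> = e \<cdot>\<^sub>v col (transpose_mat H * H) 0"
    using Hc n mult_mat_vec[of "transpose_mat H" n n "col H 0" e]
    by (simp add: eig col_mult2[of _ n n _ n] del: col_mult)
  finally show ?thesis
    using H n by (simp add: orthonormal_mat_def)
qed

lemma spectral_mat_one_block:
  fixes V :: "real mat"
  assumes V: "V \<in> carrier_mat m m"
  shows "spectral_mat (Suc m) (four_block_mat (1\<^sub>m 1) (0\<^sub>m 1 m) (0\<^sub>m m 1) V) (case_nat e d) =
    four_block_mat (mat_diag 1 (\<lambda>_. e)) (0\<^sub>m 1 m) (0\<^sub>m m 1) (spectral_mat m V d)"
proof -
  have "mat_diag (Suc m) (case_nat e d) =
      four_block_mat (mat_diag 1 (\<lambda>_. e)) (0\<^sub>m 1 m) (0\<^sub>m m 1) (mat_diag m d)"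
    by (rule eq_matI) (auto simp: mat_diag_def split: nat.split)
  moreover have "transpose_mat (four_block_mat (1\<^sub>m 1) (0\<^sub>m 1 m) (0\<^sub>m m 1) V) =
      four_block_mat (1\<^sub>m 1) (0\<^sub>m 1 m) (0\<^sub>m m 1) (transpose_mat V)"
    using V by (intro eq_matI) auto
  ultimately show ?thesis
    using V spectral_mat_carrier[OF V, of d]
    by (simp add: mult_four_block_mat[of _ 1 1 _ m _ m _ _ 1 _ m])
qed

lemma orthonormal_mat_one_block:
  assumes "orthonormal_mat m V"
  shows "orthonormal_mat (Suc m) (four_block_mat (1\<^sub>m 1) (0\<^sub>m 1 m) (0\<^sub>m m 1) V)"
proof -
  have V: "V \<in> carrier_mat m m" "transpose_mat V * V = 1\<^sub>m m"
    using assms by (auto simp: orthonormal_mat_def)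
  have "transpose_mat (four_block_mat (1\<^sub>m 1) (0\<^sub>m 1 m) (0\<^sub>m m 1) V) =
      four_block_mat (1\<^sub>m 1) (0\<^sub>m 1 m) (0\<^sub>m m 1) (transpose_mat V)"
    using V by (intro eq_matI) auto
  moreover have "four_block_mat (1\<^sub>m 1) (0\<^sub>m 1 m) (0\<^sub>m m 1) V \<in> carrier_mat (Suc m) (Suc m)"
    using four_block_carrier_mat[of "1\<^sub>m 1" 1 1 V m m] V by simp
  ultimately show ?thesis
    using V four_block_one_mat[of 1 m]
    by (simp add: orthonormal_mat_def mult_four_block_mat[of _ 1 1 _ m _ m _ _ 1 _ m])
qed

lemma spectral_mat_conj:
  assumes "H \<in> carrier_mat n n" "W \<in> carrier_mat n n"
  shows "H * spectral_mat n W d * transpose_mat H = spectral_mat n (H * W) d"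
  using assms
  by (simp add: transpose_mult[OF assms] assoc_mult_mat[of _ n n _ n _ n] mult_carrier_mat[of _ n n _ n])

lemma sym_mat_block_of_first_col:
  assumes A: "sym_mat (Suc m) A" and col0: "col A 0 = e \<cdot>\<^sub>v unit_vec (Suc m) 0"
  defines "B \<equiv> mat m m (\<lambda>(i,j). A $$ (Suc i, Suc j))"
  shows "A = four_block_mat (mat_diag 1 (\<lambda>_. e)) (0\<^sub>m 1 m) (0\<^sub>m m 1) B" "sym_mat m B"
proof -
  have Ac: "A \<in> carrier_mat (Suc m) (Suc m)" and At: "transpose_mat A = A"
    using A by (auto simp: sym_mat_def)
  have swap: "A $$ (i, j) = A $$ (j, i)" if "i < Suc m" "j < Suc m" for i j
    using Ac At that by (metis carrier_matD index_transpose_mat(1))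
  show "sym_mat m B"
    unfolding sym_mat_def B_def by (intro conjI eq_matI) (auto intro: swap)
  show "A = four_block_mat (mat_diag 1 (\<lambda>_. e)) (0\<^sub>m 1 m) (0\<^sub>m m 1) B"
  proof (rule eq_matI)
    fix i j assume "i < dim_row (four_block_mat (mat_diag 1 (\<lambda>_. e)) (0\<^sub>m 1 m) (0\<^sub>m m 1) B)"
      "j < dim_col (four_block_mat (mat_diag 1 (\<lambda>_. e)) (0\<^sub>m 1 m) (0\<^sub>m m 1) B)"
    then have ij: "i < Suc m" "j < Suc m" by (auto simp: B_def)
    have "A $$ (i, 0) = (if i = 0 then e else 0)" if "i < Suc m" for i
      using arg_cong[OF col0, of "\<lambda>v. v $ i"] Ac that by auto
    with ij swap[OF ij] show
      "A $$ (i, j) = four_block_mat (mat_diag 1 (\<lambda>_. e)) (0\<^sub>m 1 m) (0\<^sub>m m 1) B $$ (i, j)"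
      by (auto simp: B_def mat_diag_def)
  qed (use Ac in \<open>auto simp: B_def\<close>)
qed

lemma orthonormal_mat_conj_back:
  fixes H :: "'a::field mat"
  assumes H: "orthonormal_mat n H" and A: "A \<in> carrier_mat n n"
  shows "H * (transpose_mat H * A * H) * transpose_mat H = A"
proof -
  have Hc: "H \<in> carrier_mat n n"
    using H by (rule orthonormal_mat_carrier)
  then have "H * (transpose_mat H * A * H) * transpose_mat H =
      (H * transpose_mat H) * A * (H * transpose_mat H)"
    using A by (simp add: assoc_mult_mat[of _ n n _ n _ n] mult_carrier_mat[of _ n n _ n])
  then show ?thesis
    using A orthonormal_mat_mult_transpose[OF H] by simp
qed

lemma spectral_decomposition:
  assumes "sym_mat n A"
  shows "\<exists>U d. orthonormal_mat n U \<and> A = spectral_mat n U d"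
  using assms
proof (induction n arbitrary: A)
  case 0
  then show ?case
    by (intro exI[of _ "1\<^sub>m 0"] exI) (auto simp: orthonormal_mat_def sym_mat_def intro!: eq_matI)
next
  case (Suc m)
  have Ac: "A \<in> carrier_mat (Suc m) (Suc m)"
    using Suc.prems by (simp add: sym_mat_def)
  obtain e x where x: "x \<in> carrier_vec (Suc m)" "x \<bullet> x = 1" and Ax: "A *\<^sub>v x = e \<cdot>\<^sub>v x"
    using sym_mat_unit_eigenvector[OF Suc.prems] by blast
  obtain H where H: "orthonormal_mat (Suc m) H" and Hx: "col H 0 = x"
    using householder_completion[OF x] by blast
  have Hc: "H \<in> carrier_mat (Suc m) (Suc m)"
    using H by (rule orthonormal_mat_carrier)
  define A' where "A' = transpose_mat H * A * H"
  define B where "B = mat m m (\<lambda>(i,j). A' $$ (Suc i, Suc j))"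
  have "sym_mat (Suc m) A'" "col A' 0 = e \<cdot>\<^sub>v unit_vec (Suc m) 0"
    using sym_mat_transpose_conj[OF Suc.prems Hc] deflate_eigenvector[OF H Ac] Ax Hx
    by (simp_all add: A'_def)
  note block = sym_mat_block_of_first_col[OF this, folded B_def]
  obtain V d where V: "orthonormal_mat m V" and B: "B = spectral_mat m V d"
    using Suc.IH[OF block(2)] by blast
  define W where "W = four_block_mat (1\<^sub>m 1) (0\<^sub>m 1 m) (0\<^sub>m m 1) V"
  have W: "orthonormal_mat (Suc m) W"
    unfolding W_def using V by (rule orthonormal_mat_one_block)
  have "A' = spectral_mat (Suc m) W (case_nat e d)"
    unfolding W_def using block(1) B spectral_mat_one_block orthonormal_mat_carrier[OF V] by simp
  then have "A = spectral_mat (Suc m) (H * W) (case_nat e d)"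
    using orthonormal_mat_conj_back[OF H Ac] spectral_mat_conj[OF Hc orthonormal_mat_carrier[OF W]]
    by (simp add: A'_def)
  then show ?case
    using orthonormal_mat_mult[OF H W] by blast
qed

lemma spectral_mat_permute_cols:
  assumes U: "orthonormal_mat n U" and p: "p permutes {..<n}"
  defines "V \<equiv> mat n n (\<lambda>(i,j). U $$ (i, p j))"
  shows "orthonormal_mat n V" "spectral_mat n V (d \<circ> p) = spectral_mat n U d"
proof -
  have pn: "p i < n" if "i < n" for i
    using permutes_in_image[OF p, of i] that by simp
  have "inj p"
    using p by (rule permutes_inj)
  then show "orthonormal_mat n V"
    by (intro orthonormal_matI) (auto simp: V_def orthonormal_mat_cols[OF U] pn inj_eq)
  have Uc: "U \<in> carrier_mat n n" "V \<in> carrier_mat n n"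
    using U by (auto simp: V_def orthonormal_mat_carrier)
  show "spectral_mat n V (d \<circ> p) = spectral_mat n U d"
  proof (rule eq_matI)
    fix i j assume "i < dim_row (spectral_mat n U d)" "j < dim_col (spectral_mat n U d)"
    then have ij: "i < n" "j < n" using Uc by auto
    have "spectral_mat n V (d \<circ> p) $$ (i,j) = (\<Sum>k<n. U $$ (i, p k) * d (p k) * U $$ (j, p k))"
      using Uc ij by (simp add: index_spectral_mat V_def del: index_mult_mat(1))
    also have "\<dots> = (\<Sum>k<n. U $$ (i, k) * d k * U $$ (j, k))"
      using sum.permute[OF p, of "\<lambda>k. U $$ (i, k) * d k * U $$ (j, k)"] by (simp add: comp_def)
    finally show "spectral_mat n V (d \<circ> p) $$ (i,j) = spectral_mat n U d $$ (i,j)"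
      using Uc ij by (simp add: index_spectral_mat del: index_mult_mat(1))
  qed (use Uc in auto)
qed

lemma spectral_decomposition_sorted:
  assumes "sym_mat n A"
  obtains U \<mu> where "orthonormal_mat n U" "A = spectral_mat n U \<mu>"
    "\<And>i j. i \<le> j \<Longrightarrow> j < n \<Longrightarrow> \<mu> j \<le> \<mu> i" "eigvals A = map \<mu> [0..<n]"
proof -
  obtain U d where U: "orthonormal_mat n U" and A: "A = spectral_mat n U d"
    using spectral_decomposition[OF assms] by blast
  define ys where "ys = rev (sort (map d [0..<n]))"
  have ys: "eigvals A = ys" "length ys = n"
    using eigvals_spectral_mat[OF U] by (simp_all add: A ys_def)
  obtain p where p: "p permutes {..<n}" and "permute_list p (map d [0..<n]) = ys"
    using mset_eq_permutation[of ys "map d [0..<n]"] by (auto simp: ys_def)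
  then have ys_nth: "ys ! i = d (p i)" if "i < n" for i
    using that permute_list_nth[of p "map d [0..<n]" i] permutes_in_image[OF p, of i] by simp
  have "A = spectral_mat n (mat n n (\<lambda>(i,j). U $$ (i, p j))) (d \<circ> p)"
    using spectral_mat_permute_cols[OF U p] A by simp
  also have "\<dots> = spectral_mat n (mat n n (\<lambda>(i,j). U $$ (i, p j))) (\<lambda>i. ys ! i)"
    by (rule spectral_mat_cong) (simp add: ys_nth)
  finally have "A = spectral_mat n (mat n n (\<lambda>(i,j). U $$ (i, p j))) (\<lambda>i. ys ! i)" .
  moreover have "ys ! j \<le> ys ! i" if "i \<le> j" "j < n" for i j
    using that ys(2) by (intro sorted_rev_nth_mono) (simp_all add: ys_def)
  moreover have "eigvals A = map (\<lambda>i. ys ! i) [0..<n]"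
    using ys map_nth[of ys] by simp
  ultimately show ?thesis
    by (rule that[OF spectral_mat_permute_cols(1)[OF U p]])
qed

section \<open>Scalar inequalities\<close>

lemma abel_sum_nonneg:
  fixes lam r :: "nat \<Rightarrow> real"
  assumes "\<And>i j. i \<le> j \<Longrightarrow> j < n \<Longrightarrow> lam j \<le> lam i"
    and "\<And>i. i < n \<Longrightarrow> 0 \<le> lam i"
    and "\<And>m. m < n \<Longrightarrow> 0 \<le> (\<Sum>j<Suc m. r j)"
  shows "0 \<le> (\<Sum>j<n. lam j * r j)"
  using assms
proof (induction n arbitrary: lam)
  case (Suc k)
  \<comment> \<open>Peel off the smallest weight \<open>lam k\<close>, which multiplies a nonnegative prefix sum.\<close>
  have "(\<Sum>j<Suc k. lam j * r j) = (\<Sum>j<k. (lam j - lam k) * r j) + lam k * (\<Sum>j<Suc k. r j)"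
    by (simp add: algebra_simps sum_distrib_left sum_subtractf)
  moreover have "0 \<le> (\<Sum>j<k. (lam j - lam k) * r j)"
    using Suc.prems by (intro Suc.IH) auto
  moreover have "0 \<le> lam k * (\<Sum>j<Suc k. r j)"
    using Suc.prems by simp
  ultimately show ?case
    by linarith
qed simp

lemma prefix_sum_le_weighted_sum:
  fixes c q :: "nat \<Rightarrow> real"
  assumes mono: "\<And>i j. i \<le> j \<Longrightarrow> j < n \<Longrightarrow> c i \<le> c j"
    and q: "\<And>i. i < n \<Longrightarrow> 0 \<le> q i \<and> q i \<le> 1"
    and sum_q: "(\<Sum>i<n. q i) = real m" and "m \<le> n"
  shows "(\<Sum>i<m. c i) \<le> (\<Sum>i<n. c i * q i)"
proof -
  define g where "g = c (m - 1)"
  have prefix: "{..<n} \<inter> {i. i < m} = {..<m}"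
    using \<open>m \<le> n\<close> by auto
  have indicator: "(\<Sum>i<n. f i * (if i < m then 1 else 0)) = (\<Sum>i<m. f i)" for f :: "nat \<Rightarrow> real"
  proof -
    have "(\<Sum>i<n. f i * (if i < m then 1 else 0)) = (\<Sum>i<n. if i < m then f i else 0)"
      by (intro sum.cong) auto
    also have "\<dots> = (\<Sum>i<m. f i)"
      by (simp add: sum.If_cases prefix)
    finally show ?thesis .
  qed
  have "(\<Sum>i<n. c i * q i) - (\<Sum>i<m. c i) = (\<Sum>i<n. (c i - g) * (q i - (if i < m then 1 else 0)))"
    using sum_q indicator[of c] indicator[of "\<lambda>_. 1"]
    by (simp add: algebra_simps sum_subtractf sum.distrib sum_distrib_left[symmetric])
  also have "\<dots> \<ge> 0"
  proof (intro sum_nonneg)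
    fix i assume "i \<in> {..<n}"
    then show "0 \<le> (c i - g) * (q i - (if i < m then 1 else 0))"
      using mono[of i "m - 1"] mono[of "m - 1" i] q[of i] \<open>m \<le> n\<close>
      by (auto simp: g_def mult_nonneg_nonneg mult_nonpos_nonpos)
  qed
  finally show ?thesis by simp
qed

lemma rearrangement_doubly_stochastic:
  fixes c lam :: "nat \<Rightarrow> real" and P :: "nat \<Rightarrow> nat \<Rightarrow> real"
  assumes c_mono: "\<And>i j. i \<le> j \<Longrightarrow> j < n \<Longrightarrow> c i \<le> c j"
    and lam_antimono: "\<And>i j. i \<le> j \<Longrightarrow> j < n \<Longrightarrow> lam j \<le> lam i"
    and lam_nonneg: "\<And>i. i < n \<Longrightarrow> 0 \<le> lam i"
    and P_nonneg: "\<And>i j. i < n \<Longrightarrow> j < n \<Longrightarrow> 0 \<le> P i j"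
    and P_rows: "\<And>i. i < n \<Longrightarrow> (\<Sum>j<n. P i j) = 1"
    and P_cols: "\<And>j. j < n \<Longrightarrow> (\<Sum>i<n. P i j) = 1"
  shows "(\<Sum>j<n. c j * lam j) \<le> (\<Sum>i<n. c i * (\<Sum>j<n. P i j * lam j))"
proof -
  define r where "r j = (\<Sum>i<n. c i * P i j) - c j" for j
  have prefix: "0 \<le> (\<Sum>j<Suc m. r j)" if m: "m < n" for m
  proof -
    have "(\<Sum>j<Suc m. \<Sum>i<n. c i * P i j) = (\<Sum>i<n. c i * (\<Sum>j<Suc m. P i j))"
      by (simp only: sum_distrib_left) (rule sum.swap)
    then have "(\<Sum>j<Suc m. r j) = (\<Sum>i<n. c i * (\<Sum>j<Suc m. P i j)) - (\<Sum>j<Suc m. c j)"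
      by (simp only: r_def sum_subtractf)
    moreover have "(\<Sum>j<Suc m. c j) \<le> (\<Sum>i<n. c i * (\<Sum>j<Suc m. P i j))"
    proof (rule prefix_sum_le_weighted_sum[OF c_mono])
      fix i assume i: "i < n"
      have "(\<Sum>j<Suc m. P i j) \<le> (\<Sum>j<n. P i j)"
        using m i P_nonneg by (intro sum_mono2) auto
      moreover have "0 \<le> (\<Sum>j<Suc m. P i j)"
        using m i P_nonneg by (intro sum_nonneg) auto
      ultimately show "0 \<le> (\<Sum>j<Suc m. P i j) \<and> (\<Sum>j<Suc m. P i j) \<le> 1"
        using P_rows[OF i] by simp
    next
      show "(\<Sum>i<n. \<Sum>j<Suc m. P i j) = real (Suc m)"
        using m P_cols by (subst sum.swap) simp
    qed (use m in auto)
    ultimately show ?thesis by simp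
  qed
  have "0 \<le> (\<Sum>j<n. lam j * r j)"
    by (rule abel_sum_nonneg) (use prefix lam_antimono lam_nonneg in auto)
  moreover have "(\<Sum>j<n. lam j * (\<Sum>i<n. c i * P i j)) = (\<Sum>j<n. \<Sum>i<n. c i * (P i j * lam j))"
    by (simp add: sum_distrib_left mult_ac)
  moreover have "\<dots> = (\<Sum>i<n. c i * (\<Sum>j<n. P i j * lam j))"
    by (subst sum.swap) (simp add: sum_distrib_left)
  ultimately show ?thesis
    by (simp add: r_def right_diff_distrib sum_subtractf mult.commute)
qed

text \<open>\<open>log_conj t c = sup (l \<ge> 0). ln (l + t) - c l\<close>, the concave conjugate of \<open>ln (_ + t)\<close>.\<close>

definition log_conj :: "real \<Rightarrow> real \<Rightarrow> real" where
  "log_conj t c = (if c * t \<le> 1 then c * t - ln c - 1 else ln t)"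

lemma ln_add_le_log_conj:
  assumes c: "0 < c" and l: "0 \<le> l" and t: "0 \<le> t" and lt: "0 < l + t"
  shows "ln (l + t) \<le> c * l + log_conj t c"
proof (cases "c * t \<le> 1")
  case True
  have "ln (c * (l + t)) \<le> c * (l + t) - 1"
    using c lt by (intro ln_le_minus_one) simp
  moreover have "ln (c * (l + t)) = ln c + ln (l + t)"
    using c lt by (intro ln_mult_pos) simp_all
  ultimately show ?thesis
    using True by (simp add: log_conj_def algebra_simps)
next
  case False
  then have tp: "0 < t"
    using t by (cases "t = 0") auto
  then have "1 / t \<le> c"
    using False by (simp add: field_simps)
  have "ln (l + t) = ln t + ln (1 + l / t)"
    using tp l by (simp add: field_simps ln_div)
  also have "\<dots> \<le> ln t + l / t"
    using l tp by (simp add: ln_add_one_self_le_self)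
  also have "l / t \<le> c * l"
    using \<open>1 / t \<le> c\<close> l mult_left_mono[of "1 / t" c l] by (simp add: mult.commute)
  finally show ?thesis
    using False by (simp add: log_conj_def)
qed

lemma elog_sum_le:
  fixes s :: nat and x b :: "nat \<Rightarrow> real"
  assumes "\<And>i. i < s \<Longrightarrow> 0 \<le> x i" and "\<And>i. i < s \<Longrightarrow> 0 < x i \<Longrightarrow> ln (x i) \<le> b i"
  shows "(\<Sum>i<s. elog (x i)) \<le> ereal (\<Sum>i<s. b i)"
proof (cases "\<forall>i<s. 0 < x i")
  case True
  then have "(\<Sum>i<s. elog (x i)) = ereal (\<Sum>i<s. ln (x i))"
    by (simp add: elog_def)
  also have "\<dots> \<le> ereal (\<Sum>i<s. b i)"
    using assms True by (auto intro!: sum_mono)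
  finally show ?thesis .
next
  case False
  then obtain i where "i < s" "elog (x i) = -\<infinity>"
    by (auto simp: elog_def)
  moreover have "(\<Sum>j\<in>{..<s}-{i}. elog (x j)) \<noteq> \<infinity>"
    by (simp add: sum_Pinfty elog_def)
  ultimately have "(\<Sum>i<s. elog (x i)) = -\<infinity>"
    by (simp add: sum.remove[of "{..<s}" i])
  then show ?thesis
    by simp
qed

lemma sum_const_ereal: "(\<Sum>i\<in>A. c) = ereal (real (card A)) * (c :: ereal)"
proof (induction A rule: infinite_finite_induct)
  case (insert x F)
  then show ?case
    by (cases c) (auto simp: algebra_simps)
qed simp_all

lemma sum_lessThan_split:
  fixes f :: "nat \<Rightarrow> 'a::comm_monoid_add"
  shows "k \<le> m \<Longrightarrow> (\<Sum>i<m. f i) = (\<Sum>i<k. f i) + (\<Sum>i = k..<m. f i)"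
  by (simp add: atLeast0LessThan[symmetric] sum.atLeastLessThan_concat)

section \<open>The index in the definition of \<open>\<psi>\<^sub>s\<close>\<close>

definition tail_avg :: "real list \<Rightarrow> nat \<Rightarrow> nat \<Rightarrow> real" where
  "tail_avg y s k = (\<Sum>i = k..<length y. y ! i) / real (s - k)"

text \<open>List positions are 0-based, so \<open>y ! (k - 1)\<close> is the paper's \<open>y\<^sup>\<down>\<^sub>k\<close>; the convention
  \<open>y\<^sup>\<down>\<^sub>0 = \<infinity>\<close> becomes the guard \<open>0 < k\<close>.\<close>

definition psi_index :: "real list \<Rightarrow> nat \<Rightarrow> nat \<Rightarrow> bool" where
  "psi_index y s k \<longleftrightarrow> k < s \<and> (0 < k \<longrightarrow> tail_avg y s k < y ! (k - 1)) \<and> y ! k \<le> tail_avg y s k"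

context
  fixes y :: "real list" and s :: nat
  assumes y_antimono: "\<And>i j. i \<le> j \<Longrightarrow> j < length y \<Longrightarrow> y ! j \<le> y ! i"
    and y_nonneg: "\<And>i. i < length y \<Longrightarrow> 0 \<le> y ! i"
    and s_pos: "1 \<le> s" and s_le: "s \<le> length y"
begin

lemma tail_avg_Suc:
  assumes "Suc j < s"
  shows "tail_avg y s j * real (s - j) = y ! j + tail_avg y s (Suc j) * real (s - Suc j)"
  using assms s_le by (simp add: tail_avg_def sum.atLeast_Suc_lessThan)

lemma tail_avg_step:
  assumes j: "Suc j < s" and le: "y ! j \<le> tail_avg y s j"
  shows "tail_avg y s j \<le> tail_avg y s (Suc j)" "y ! Suc j \<le> tail_avg y s (Suc j)"
proof -
  have a: "0 < real (s - Suc j)" and sj: "real (s - j) = real (s - Suc j) + 1"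
    using j by auto
  have "tail_avg y s j * real (s - Suc j) \<le> tail_avg y s (Suc j) * real (s - Suc j)"
    using tail_avg_Suc[OF j] le unfolding sj by (simp add: algebra_simps)
  then show "tail_avg y s j \<le> tail_avg y s (Suc j)"
    using a by simp
  moreover have "y ! Suc j \<le> y ! j"
    using j s_le by (intro y_antimono) auto
  ultimately show "y ! Suc j \<le> tail_avg y s (Suc j)"
    using le by simp
qed

lemma psi_index_exists: "\<exists>k. psi_index y s k"
proof -
  define Q where "Q k \<longleftrightarrow> k < s \<and> y ! k \<le> tail_avg y s k" for k
  have "0 \<le> (\<Sum>i = s..<length y. y ! i)"
    using y_nonneg by (intro sum_nonneg) auto
  then have "Q (s - 1)"
    using s_pos s_le by (simp add: Q_def tail_avg_def sum.atLeast_Suc_lessThan)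
  define k where "k = (LEAST k. Q k)"
  have Qk: "Q k"
    unfolding k_def by (rule LeastI) fact
  have "tail_avg y s k < y ! (k - 1)" if "0 < k"
  proof -
    obtain j where kj: "k = Suc j"
      using \<open>0 < k\<close> gr0_implies_Suc by blast
    have j: "Suc j < s"
      using Qk kj by (simp add: Q_def)
    have "\<not> Q j"
      using not_less_Least[of j Q] kj k_def by simp
    then have lt: "tail_avg y s j < y ! j"
      using j by (simp add: Q_def)
    define a where "a = real (s - Suc j)"
    have a: "0 < a" and "real (s - j) = a + 1"
      using j by (auto simp: a_def)
    then have "tail_avg y s j * (a + 1) = y ! j + tail_avg y s (Suc j) * a"
      using tail_avg_Suc[OF j] by (simp add: a_def)
    moreover have "tail_avg y s j * (a + 1) < y ! j * (a + 1)"
      using lt a by (intro mult_strict_right_mono) auto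
    ultimately have "tail_avg y s (Suc j) * a < y ! j * a"
      by (simp add: algebra_simps)
    then show ?thesis
      using a kj by simp
  qed
  with Qk show ?thesis
    unfolding Q_def psi_index_def by blast
qed

lemma psi_index_unique:
  assumes "psi_index y s k1" "psi_index y s k2"
  shows "k1 = k2"
proof (rule ccontr)
  assume "k1 \<noteq> k2"
  \<comment> \<open>Once \<open>y ! j \<le> tail_avg y s j\<close> holds it persists, and the tail average only grows.\<close>
  have persist: "y ! j \<le> tail_avg y s j \<and> tail_avg y s k \<le> tail_avg y s j"
    if "psi_index y s k" "k \<le> j" "j < s" for k j
    using that(2,3)
  proof (induction j rule: dec_induct)
    case base
    then show ?case using that(1) by (simp add: psi_index_def)
  next
    case (step j)
    then show ?case
      using tail_avg_step[of j] by fastforce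
  qed
  obtain k k' where k: "psi_index y s k" and k': "psi_index y s k'" and "k < k'"
    using assms \<open>k1 \<noteq> k2\<close> by (metis linorder_neqE_nat)
  then have "y ! (k' - 1) \<le> tail_avg y s (k' - 1)" "tail_avg y s (k' - 1) \<le> tail_avg y s k'"
    using persist[OF k, of "k' - 1"] tail_avg_step[of "k' - 1"] k' by (auto simp: psi_index_def)
  moreover have "tail_avg y s k' < y ! (k' - 1)"
    using k' \<open>k < k'\<close> by (simp add: psi_index_def)
  ultimately show False
    by simp
qed

lemma psi_eq_at_index:
  assumes "psi_index y s k"
  shows "psi s y = (\<Sum>i<k. elog (y ! i)) + ereal (real (s - k)) * elog (tail_avg y s k)"
proof -
  have "(k' < s \<and> ereal (tail_avg y s k') < (if k' = 0 then \<infinity> else ereal (y ! (k' - 1)))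
        \<and> y ! k' \<le> tail_avg y s k') \<longleftrightarrow> psi_index y s k'" for k'
    by (auto simp: psi_index_def)
  then have the_k: "(THE k. k < s \<and> ereal (tail_avg y s k) < (if k = 0 then \<infinity> else ereal (y ! (k - 1)))
        \<and> y ! k \<le> tail_avg y s k) = k"
    using assms psi_index_unique by (simp add: the_equality)
  have "rev (sort y) = y"
    by (rule rev_sort_eq_self[OF y_antimono])
  then show ?thesis
    unfolding psi_def Let_def by (simp only: tail_avg_def[symmetric] the_k)
qed

end

section \<open>Hypersimplices\<close>

definition hypersimplex :: "'a set \<Rightarrow> nat \<Rightarrow> ('a \<Rightarrow> real) set" where
  "hypersimplex I r = {q. (\<forall>i\<in>I. 0 \<le> q i \<and> q i \<le> 1) \<and> (\<Sum>i\<in>I. q i) = real r}"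

lemma hypersimplex_single_fractional:
  assumes I: "finite I" and q: "q \<in> hypersimplex I r" and i: "i \<in> I"
    and others: "\<forall>j\<in>I - {i}. q j = 0 \<or> q j = 1"
  shows "q i = 0 \<or> q i = 1"
proof -
  define c where "c = card {j \<in> I - {i}. q j = 1}"
  have "(\<Sum>j\<in>I - {i}. q j) = (\<Sum>j\<in>I - {i}. if q j = 1 then 1 else 0)"
    using others by (intro sum.cong) auto
  also have "\<dots> = real c"
    using I by (simp add: sum.If_cases c_def Int_def)
  finally have "q i = real r - real c"
    using q I i by (simp add: hypersimplex_def sum.remove)
  moreover have "0 \<le> q i" "q i \<le> 1"
    using q i by (auto simp: hypersimplex_def)
  ultimately show ?thesis
    by (cases "r \<le> c") auto
qed

definition fractional_coords :: "'a set \<Rightarrow> ('a \<Rightarrow> real) \<Rightarrow> 'a set" where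
  "fractional_coords I q = {i \<in> I. 0 < q i \<and> q i < 1}"

definition move_mass :: "('a \<Rightarrow> real) \<Rightarrow> 'a \<Rightarrow> 'a \<Rightarrow> real \<Rightarrow> 'a \<Rightarrow> real" where
  "move_mass q i j d l = q l + (if l = i then d else 0) - (if l = j then d else 0)"

lemma move_mass_hypersimplex:
  assumes I: "finite I" and q: "q \<in> hypersimplex I r" and ij: "i \<in> I" "j \<in> I" "i \<noteq> j"
    and "0 \<le> q i + d" "q i + d \<le> 1" "0 \<le> q j - d" "q j - d \<le> 1"
  shows "move_mass q i j d \<in> hypersimplex I r"
proof -
  have "(\<Sum>l\<in>I. move_mass q i j d l) = (\<Sum>l\<in>I. q l)"
    using I ij by (simp add: move_mass_def sum.distrib sum_subtractf)
  moreover have "0 \<le> move_mass q i j d l \<and> move_mass q i j d l \<le> 1" if "l \<in> I" for l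
    using assms that by (auto simp: move_mass_def hypersimplex_def)
  ultimately show ?thesis
    using q by (simp add: hypersimplex_def)
qed

lemma fractional_coords_move_mass:
  assumes "i \<in> fractional_coords I q" "j \<in> fractional_coords I q" "i \<noteq> j"
    and "q i + d \<in> {0, 1} \<or> q j - d \<in> {0, 1}"
  shows "fractional_coords I (move_mass q i j d) \<subset> fractional_coords I q"
proof -
  have "fractional_coords I (move_mass q i j d) \<subseteq> fractional_coords I q"
    using assms(1,2) by (auto simp: fractional_coords_def move_mass_def split: if_splits)
  moreover have "i \<notin> fractional_coords I (move_mass q i j d) \<or> j \<notin> fractional_coords I (move_mass q i j d)"
    using assms(3,4) by (auto simp: fractional_coords_def move_mass_def)
  ultimately show ?thesis
    using assms(1,2) by blast
qed

lemma hypersimplex_split: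
  assumes I: "finite I" and q: "q \<in> hypersimplex I r" and frac: "fractional_coords I q \<noteq> {}"
  obtains q1 q2 a where "q1 \<in> hypersimplex I r" "q2 \<in> hypersimplex I r" "0 \<le> a" "a \<le> 1"
    "fractional_coords I q1 \<subset> fractional_coords I q" "fractional_coords I q2 \<subset> fractional_coords I q"
    "q = (\<lambda>l. a * q1 l + (1 - a) * q2 l)"
proof -
  obtain i where i: "i \<in> fractional_coords I q"
    using frac by blast
  obtain j where j: "j \<in> fractional_coords I q" "j \<noteq> i"
  proof (rule ccontr)
    assume "\<not> thesis"
    then have "\<forall>j\<in>I - {i}. q j = 0 \<or> q j = 1"
      using that q by (force simp: fractional_coords_def hypersimplex_def)
    then have "q i = 0 \<or> q i = 1"
      using i by (intro hypersimplex_single_fractional[OF I q]) (auto simp: fractional_coords_def)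
    then show False
      using i by (auto simp: fractional_coords_def)
  qed
  \<comment> \<open>Move mass between the two fractional coordinates, in either direction, until one of them
    becomes \<open>0\<close> or \<open>1\<close>.\<close>
  define d1 where "d1 = min (1 - q i) (q j)"
  define d2 where "d2 = min (q i) (1 - q j)"
  define a where "a = d2 / (d1 + d2)"
  have qi: "0 < q i" "q i < 1" "i \<in> I" and qj: "0 < q j" "q j < 1" "j \<in> I"
    using i j by (auto simp: fractional_coords_def)
  then have d: "0 < d1" "0 < d2"
    by (auto simp: d1_def d2_def)
  have "move_mass q i j d1 \<in> hypersimplex I r" "move_mass q i j (- d2) \<in> hypersimplex I r"
    using qi qj j(2) by (intro move_mass_hypersimplex[OF I q]; auto simp: d1_def d2_def min_def)+
  moreover have "0 \<le> a" "a \<le> 1"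
    using d by (auto simp: a_def)
  moreover have "fractional_coords I (move_mass q i j d1) \<subset> fractional_coords I q"
    "fractional_coords I (move_mass q i j (- d2)) \<subset> fractional_coords I q"
    using i j by (intro fractional_coords_move_mass; auto simp: d1_def d2_def min_def)+
  moreover have "q = (\<lambda>l. a * move_mass q i j d1 l + (1 - a) * move_mass q i j (- d2) l)"
  proof
    fix l
    have "a * d1 - (1 - a) * d2 = 0"
      using d by (simp add: a_def field_simps)
    then show "q l = a * move_mass q i j d1 l + (1 - a) * move_mass q i j (- d2) l"
      by (simp add: move_mass_def algebra_simps)
  qed
  ultimately show ?thesis
    by (rule that)
qed

lemma hypersimplex_induct [consumes 2, case_names vertex convex]:
  assumes I: "finite I" and q: "q \<in> hypersimplex I r"
    and vertex: "\<And>q. q \<in> hypersimplex I r \<Longrightarrow> \<forall>i\<in>I. q i = 0 \<or> q i = 1 \<Longrightarrow> P q"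
    and convex: "\<And>q1 q2 a. q1 \<in> hypersimplex I r \<Longrightarrow> q2 \<in> hypersimplex I r \<Longrightarrow> 0 \<le> a \<Longrightarrow> a \<le> 1 \<Longrightarrow>
      P q1 \<Longrightarrow> P q2 \<Longrightarrow> P (\<lambda>i. a * q1 i + (1 - a) * q2 i)"
  shows "P q"
proof -
  have "P q" if "card (fractional_coords I q) = m" "q \<in> hypersimplex I r" for m q
    using that
  proof (induction m arbitrary: q rule: less_induct)
    case (less m q)
    show ?case
    proof (cases "fractional_coords I q = {}")
      case True
      then show ?thesis
        using less.prems(2) by (intro vertex) (force simp: fractional_coords_def hypersimplex_def)+
    next
      case False
      have "finite (fractional_coords I q)"
        using I by (simp add: fractional_coords_def)
      with hypersimplex_split[OF I less.prems(2) False] less.prems(1) show ?thesis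
        by (metis convex less.IH psubset_card_mono)
    qed
  qed
  then show ?thesis
    using q by blast
qed

lemma image_mset_scaled_01:
  assumes I: "finite I" and q: "q \<in> hypersimplex I r" "\<forall>i\<in>I. q i = 0 \<or> q i = 1"
  shows "image_mset (\<lambda>i. a * q i) (mset_set I) = replicate_mset r a + replicate_mset (card I - r) 0"
proof -
  define J where "J = {i \<in> I. q i = 1}"
  have "(\<Sum>i\<in>I. q i) = (\<Sum>i\<in>I. if q i = 1 then 1 else 0)"
    using q(2) by (intro sum.cong) auto
  then have "real r = (\<Sum>i\<in>I. if q i = 1 then 1 else 0)"
    using q(1) by (simp add: hypersimplex_def)
  then have card_J: "card J = r"
    using I by (simp add: sum.If_cases J_def Int_def)
  have "mset_set I = mset_set J + mset_set (I - J)"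
    using I mset_set_Union[of J "I - J"] by (simp add: J_def Un_absorb1 Un_Diff_cancel)
  moreover have "image_mset (\<lambda>i. a * q i) (mset_set J) = image_mset (\<lambda>_. a) (mset_set J)"
    using I by (intro image_mset_cong) (simp add: J_def)
  moreover have "image_mset (\<lambda>i. a * q i) (mset_set (I - J)) = image_mset (\<lambda>_. 0) (mset_set (I - J))"
    using I q(2) by (intro image_mset_cong) (auto simp: J_def)
  moreover have "card (I - J) = card I - r"
    using I card_J by (simp add: J_def card_Diff_subset)
  ultimately show ?thesis
    using I card_J by (simp add: image_mset_const_eq)
qed

section \<open>A concave majorant of \<open>\<Phi>\<^sub>s\<close>\<close>

definition dual_weights :: "nat \<Rightarrow> (nat \<Rightarrow> real) set" where
  "dual_weights n = {c. (\<forall>i<n. 0 < c i) \<and> (\<forall>i j. i \<le> j \<longrightarrow> j < n \<longrightarrow> c i \<le> c j)}"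

definition dual_obj :: "nat \<Rightarrow> nat \<Rightarrow> real \<Rightarrow> real mat \<Rightarrow> (nat \<Rightarrow> real) \<Rightarrow> real mat \<Rightarrow> real" where
  "dual_obj n s t U c Y = (\<Sum>i<n. c i * (col U i \<bullet> (Y *\<^sub>v col U i))) + (\<Sum>i<s. log_conj t (c i))"

text \<open>An infimum of functions affine in \<open>Y\<close>, hence concave.\<close>

definition dual_bound :: "nat \<Rightarrow> nat \<Rightarrow> real \<Rightarrow> real mat \<Rightarrow> real mat \<Rightarrow> ereal" where
  "dual_bound n s t U Y = (INF c \<in> dual_weights n. ereal (dual_obj n s t U c Y))"

lemma dual_obj_lincomb:
  assumes U: "U \<in> carrier_mat n n" and X: "X \<in> carrier_mat n n" and Y: "Y \<in> carrier_mat n n"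
  shows "dual_obj n s t U c (a \<cdot>\<^sub>m X + (1 - a) \<cdot>\<^sub>m Y) =
    a * dual_obj n s t U c X + (1 - a) * dual_obj n s t U c Y"
proof -
  define SX SY where "SX = (\<Sum>i<n. c i * (col U i \<bullet> (X *\<^sub>v col U i)))"
    and "SY = (\<Sum>i<n. c i * (col U i \<bullet> (Y *\<^sub>v col U i)))"
  have "(\<Sum>i<n. c i * (col U i \<bullet> ((a \<cdot>\<^sub>m X + (1 - a) \<cdot>\<^sub>m Y) *\<^sub>v col U i))) =
      (\<Sum>i<n. a * (c i * (col U i \<bullet> (X *\<^sub>v col U i))) + (1 - a) * (c i * (col U i \<bullet> (Y *\<^sub>v col U i))))"
    using U by (intro sum.cong) (simp_all add: quadratic_form_lincomb[OF X Y] algebra_simps)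
  also have "\<dots> = a * SX + (1 - a) * SY"
    by (simp add: SX_def SY_def sum.distrib sum_distrib_left)
  finally show ?thesis
    unfolding dual_obj_def SX_def[symmetric] SY_def[symmetric] by (simp add: algebra_simps)
qed

lemma concave_on_psd_dual_bound:
  assumes U: "U \<in> carrier_mat n n"
  shows "concave_on_psd n (dual_bound n s t U)"
  unfolding concave_on_psd_def
proof (intro allI impI)
  fix X Y :: "real mat" and a r1 r2 :: real
  assume h: "psd_mat n X \<and> psd_mat n Y \<and> 0 \<le> a \<and> a \<le> 1 \<and>
    ereal r1 \<le> dual_bound n s t U X \<and> ereal r2 \<le> dual_bound n s t U Y"
  have X: "X \<in> carrier_mat n n" and Y: "Y \<in> carrier_mat n n"
    using h by (auto simp: psd_mat_def sym_mat_def)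
  show "ereal (a * r1 + (1 - a) * r2) \<le> dual_bound n s t U (a \<cdot>\<^sub>m X + (1 - a) \<cdot>\<^sub>m Y)"
    unfolding dual_bound_def
  proof (rule INF_greatest)
    fix c assume c: "c \<in> dual_weights n"
    have "r1 \<le> dual_obj n s t U c X" "r2 \<le> dual_obj n s t U c Y"
      using h c INF_lower[OF c, of "\<lambda>c. ereal (dual_obj n s t U c _)"]
      unfolding dual_bound_def by (meson ereal_less_eq(3) order_trans)+
    then have "a * r1 + (1 - a) * r2 \<le> a * dual_obj n s t U c X + (1 - a) * dual_obj n s t U c Y"
      using h by (intro add_mono mult_left_mono) auto
    then show "ereal (a * r1 + (1 - a) * r2) \<le> ereal (dual_obj n s t U c (a \<cdot>\<^sub>m X + (1 - a) \<cdot>\<^sub>m Y))"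
      by (simp add: dual_obj_lincomb[OF U X Y])
  qed
qed

lemma Phi_le_dual_bound:
  assumes U: "orthonormal_mat n U" and sn: "s \<le> n" and t: "0 \<le> t" and Y: "psd_mat n Y"
  shows "Phi s Y t \<le> dual_bound n s t U Y"
  unfolding dual_bound_def
proof (rule INF_greatest)
  fix c assume "c \<in> dual_weights n"
  then have c_pos: "\<And>i. i < n \<Longrightarrow> 0 < c i" and c_mono: "\<And>i j. i \<le> j \<Longrightarrow> j < n \<Longrightarrow> c i \<le> c j"
    by (auto simp: dual_weights_def)
  have Uc: "U \<in> carrier_mat n n"
    using U by (rule orthonormal_mat_carrier)
  obtain V lam where V: "orthonormal_mat n V" and YV: "Y = spectral_mat n V lam"
    and lam_antimono: "\<And>i j. i \<le> j \<Longrightarrow> j < n \<Longrightarrow> lam j \<le> lam i" and eig: "eigvals Y = map lam [0..<n]"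
    using Y spectral_decomposition_sorted unfolding psd_mat_def by metis
  have Vc: "V \<in> carrier_mat n n"
    using V by (rule orthonormal_mat_carrier)
  have lam_nonneg: "\<And>i. i < n \<Longrightarrow> 0 \<le> lam i"
    using psd_mat_spectral_mat_nonneg V Y YV by blast
  \<comment> \<open>The squared overlaps \<open>\<langle>u\<^sub>i, v\<^sub>k\<rangle>\<^sup>2\<close> of two orthonormal bases form a doubly stochastic matrix.\<close>
  define P where "P i k = (\<Sum>a<n. U $$ (a,i) * V $$ (a,k))\<^sup>2" for i k
  have quad: "col U i \<bullet> (Y *\<^sub>v col U i) = (\<Sum>k<n. P i k * lam k)" if "i < n" for i
    unfolding YV using Uc Vc that
    by (simp add: quadratic_form_spectral_mat[OF Vc] P_def mult.commute)
  have "(\<Sum>k<n. c k * lam k) \<le> (\<Sum>i<n. c i * (\<Sum>k<n. P i k * lam k))"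
  proof (rule rearrangement_doubly_stochastic[OF c_mono lam_antimono lam_nonneg])
    show "\<And>i. i < n \<Longrightarrow> (\<Sum>k<n. P i k) = 1"
      unfolding P_def using orthonormal_overlap_sum[OF U V] by simp
    show "\<And>k. k < n \<Longrightarrow> (\<Sum>i<n. P i k) = 1"
      unfolding P_def using orthonormal_overlap_sum[OF V U] by (simp add: mult.commute)
  qed (auto simp: P_def)
  moreover have "(\<Sum>k<s. c k * lam k) \<le> (\<Sum>k<n. c k * lam k)"
    using sn
    by (intro sum_mono2) (auto intro!: mult_nonneg_nonneg lam_nonneg simp: less_imp_le[OF c_pos])
  ultimately have "(\<Sum>k<s. c k * lam k + log_conj t (c k)) \<le> dual_obj n s t U c Y"
    by (simp add: dual_obj_def quad sum.distrib)
  moreover have "Phi s Y t \<le> ereal (\<Sum>k<s. c k * lam k + log_conj t (c k))"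
    unfolding Phi_def eig using sn lam_nonneg t c_pos
    by (intro elog_sum_le) (auto intro!: ln_add_le_log_conj)
  ultimately show "Phi s Y t \<le> ereal (dual_obj n s t U c Y)"
    by (meson ereal_less_eq(3) order_trans)
qed

section \<open>Water filling\<close>

text \<open>For \<open>\<mu> = \<lambda>(X)\<close>: \<open>shifted\<close> is \<open>y = \<lambda>(X) + t \<one>\<^sub>s\<close>, \<open>k\<close> is the index in \<open>\<psi>\<^sub>s(y)\<close>, and \<open>level\<close>
  is the common value \<open>(\<Sum>i\<ge>k. y ! i) / (s - k)\<close> to which \<open>\<psi>\<^sub>s\<close> levels the tail of \<open>y\<close>.\<close>

locale water_filling =
  fixes n s :: nat and t :: real and \<mu> :: "nat \<Rightarrow> real"
  assumes s_pos: "1 \<le> s" and s_le_n: "s \<le> n" and t_nonneg: "0 \<le> t"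
    and \<mu>_antimono: "\<And>i j. i \<le> j \<Longrightarrow> j < n \<Longrightarrow> \<mu> j \<le> \<mu> i"
    and \<mu>_nonneg: "\<And>i. i < n \<Longrightarrow> 0 \<le> \<mu> i"
begin

definition shifted :: "real list" where
  "shifted = map (\<lambda>i. \<mu> i + (if i < s then t else 0)) [0..<n]"

definition k :: nat where
  "k = (THE k. psi_index shifted s k)"

definition level :: real where
  "level = tail_avg shifted s k"

lemma length_shifted [simp]: "length shifted = n"
  by (simp add: shifted_def)

lemma shifted_nth: "i < n \<Longrightarrow> shifted ! i = \<mu> i + (if i < s then t else 0)"
  by (simp add: shifted_def)

lemma shifted_antimono: "i \<le> j \<Longrightarrow> j < length shifted \<Longrightarrow> shifted ! j \<le> shifted ! i"
  using \<mu>_antimono[of i j] t_nonneg by (auto simp: shifted_nth)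

lemma shifted_nonneg: "i < length shifted \<Longrightarrow> 0 \<le> shifted ! i"
  using \<mu>_nonneg t_nonneg by (simp add: shifted_nth)

lemma psi_index_k: "psi_index shifted s k"
proof -
  note facts = shifted_antimono shifted_nonneg s_pos
  have "\<exists>!k. psi_index shifted s k"
    using psi_index_exists[OF facts] psi_index_unique[OF facts] s_le_n by auto
  then show ?thesis
    unfolding k_def by (rule theI')
qed

lemma k_less_s: "k < s"
  using psi_index_k by (simp add: psi_index_def)

lemma psi_shifted: "psi s shifted = (\<Sum>i<k. elog (shifted ! i)) + ereal (real (s - k)) * elog level"
  unfolding level_def
  using psi_eq_at_index[OF shifted_antimono shifted_nonneg s_pos _ psi_index_k] s_le_n by simp

lemma shifted_head: "i < k \<Longrightarrow> shifted ! i = \<mu> i + t"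
  using k_less_s s_le_n by (simp add: shifted_nth)

lemma level_less_head:
  assumes "i < k"
  shows "level < shifted ! i"
proof -
  have "shifted ! (k - 1) \<le> shifted ! i"
    using assms k_less_s s_le_n by (intro shifted_antimono) auto
  with assms psi_index_k show ?thesis
    by (simp add: psi_index_def level_def)
qed

lemma level_nonneg: "0 \<le> level"
  using psi_index_k shifted_nonneg[of k] k_less_s s_le_n by (auto simp: psi_index_def level_def)

lemma shifted_head_pos: "i < k \<Longrightarrow> 0 < shifted ! i"
  using level_less_head level_nonneg by fastforce

lemma tail_sum: "(\<Sum>i = k..<n. \<mu> i) = real (s - k) * (level - t)"
proof -
  have "(\<Sum>i = k..<n. shifted ! i) = (\<Sum>i = k..<n. \<mu> i) + (\<Sum>i = k..<n. if i < s then t else 0)"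
    by (simp add: shifted_nth sum.distrib)
  also have "(\<Sum>i = k..<n. if i < s then t else 0) = real (s - k) * t"
  proof -
    have "{k..<n} \<inter> {i. i < s} = {k..<s}"
      using s_le_n by auto
    then show ?thesis
      by (simp add: sum.If_cases)
  qed
  moreover have "(\<Sum>i = k..<n. shifted ! i) = real (s - k) * level"
    using k_less_s by (simp add: level_def tail_avg_def)
  ultimately show ?thesis
    by (simp add: algebra_simps)
qed

lemma t_le_level: "t \<le> level"
proof -
  have "0 \<le> (\<Sum>i = k..<n. \<mu> i)"
    using \<mu>_nonneg by (intro sum_nonneg) auto
  then show ?thesis
    using k_less_s by (simp add: tail_sum zero_le_mult_iff)
qed

lemma mu_le_level_sub_t: "k \<le> i \<Longrightarrow> i < n \<Longrightarrow> \<mu> i \<le> level - t"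
  using psi_index_k \<mu>_antimono[of k i] k_less_s
  by (auto simp: psi_index_def level_def shifted_nth)

lemma level_sub_t_less_mu: "i < k \<Longrightarrow> level - t < \<mu> i"
  using level_less_head shifted_head by fastforce

lemma psi_shifted_pos:
  "0 < level \<Longrightarrow> psi s shifted = ereal ((\<Sum>i<k. ln (shifted ! i)) + real (s - k) * ln level)"
  using shifted_head_pos by (simp add: psi_shifted elog_def)

lemma psi_shifted_zero: "level = 0 \<Longrightarrow> psi s shifted = -\<infinity>"
  using shifted_head_pos k_less_s by (simp add: psi_shifted elog_def)

lemma dual_obj_spectral:
  assumes "orthonormal_mat n U"
  shows "dual_obj n s t U c (spectral_mat n U \<mu>) = (\<Sum>i<n. c i * \<mu> i) + (\<Sum>i<s. log_conj t (c i))"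
  using assms by (simp add: dual_obj_def quadratic_form_spectral_mat_col)

definition head_weights :: "real \<Rightarrow> nat \<Rightarrow> real" where
  "head_weights M i = (if i < k then 1 / shifted ! i else M)"

lemma head_weights_mem:
  assumes M: "0 < M" and "0 < k \<Longrightarrow> 1 / shifted ! (k - 1) \<le> M"
  shows "head_weights M \<in> dual_weights n"
  unfolding dual_weights_def
proof (intro CollectI conjI allI impI)
  show "0 < head_weights M i" for i
    using M shifted_head_pos by (simp add: head_weights_def)
  fix i j assume ij: "i \<le> j" "j < n"
  show "head_weights M i \<le> head_weights M j"
  proof (cases "j < k")
    case True
    then show ?thesis
      using ij shifted_head_pos[of j] shifted_antimono[of i j] by (simp add: head_weights_def frac_le)
  next
    case False
    have "1 / shifted ! i \<le> 1 / shifted ! (k - 1)" if "i < k"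
      using that shifted_head_pos[of "k - 1"] shifted_antimono[of i "k - 1"] k_less_s s_le_n
      by (intro frac_le) auto
    then show ?thesis
      using False assms(2) by (auto simp: head_weights_def)
  qed
qed

lemma dual_obj_head_term:
  assumes "i < k"
  shows "\<mu> i / shifted ! i + log_conj t (1 / shifted ! i) = ln (shifted ! i)"
proof -
  have y: "shifted ! i = \<mu> i + t" "0 < shifted ! i"
    using assms shifted_head shifted_head_pos by auto
  moreover have "0 \<le> \<mu> i"
    using assms k_less_s s_le_n by (intro \<mu>_nonneg) simp
  ultimately have "t \<le> shifted ! i"
    by simp
  then have "1 / shifted ! i * t \<le> 1"
    using y(2) by (simp add: field_simps)
  have "\<mu> i / shifted ! i + 1 / shifted ! i * t = (\<mu> i + t) / shifted ! i"
    by (simp add: add_divide_distrib)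
  then have "\<mu> i / shifted ! i + 1 / shifted ! i * t = 1"
    using y by simp
  moreover have "ln (1 / shifted ! i) = - ln (shifted ! i)"
    using y by (simp add: ln_div)
  ultimately show ?thesis
    using \<open>1 / shifted ! i * t \<le> 1\<close> by (simp add: log_conj_def)
qed

lemma dual_obj_head_weights:
  assumes "orthonormal_mat n U"
  shows "dual_obj n s t U (head_weights M) (spectral_mat n U \<mu>) =
    (\<Sum>i<k. ln (shifted ! i)) + M * (\<Sum>i = k..<n. \<mu> i) + real (s - k) * log_conj t M"
proof -
  have "dual_obj n s t U (head_weights M) (spectral_mat n U \<mu>) =
    (\<Sum>i<k. 1 / shifted ! i * \<mu> i + log_conj t (1 / shifted ! i)) +
    (\<Sum>i = k..<n. M * \<mu> i) + (\<Sum>i = k..<s. log_conj t M)"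
    using k_less_s s_le_n sum_lessThan_split[of k n "\<lambda>i. head_weights M i * \<mu> i"]
      sum_lessThan_split[of k s "\<lambda>i. log_conj t (head_weights M i)"]
    by (simp add: dual_obj_spectral[OF assms] head_weights_def sum.distrib)
  then show ?thesis
    by (simp add: dual_obj_head_term sum_distrib_left)
qed

lemma dual_bound_le_head_weights:
  assumes "0 < M" "0 < k \<Longrightarrow> 1 / shifted ! (k - 1) \<le> M"
  shows "dual_bound n s t U X \<le> ereal (dual_obj n s t U (head_weights M) X)"
  unfolding dual_bound_def using head_weights_mem[OF assms] by (rule INF_lower)

lemma dual_bound_le_psi_pos_level:
  assumes U: "orthonormal_mat n U" and level: "0 < level"
  shows "dual_bound n s t U (spectral_mat n U \<mu>) \<le> psi s shifted"
proof -
  \<comment> \<open>The optimal weights are the reciprocals of the water-filled eigenvalues.\<close>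
  have "1 / shifted ! (k - 1) \<le> 1 / level" if "0 < k"
    using level that level_less_head[of "k - 1"] by (intro frac_le) auto
  then have "dual_bound n s t U (spectral_mat n U \<mu>) \<le>
      ereal (dual_obj n s t U (head_weights (1 / level)) (spectral_mat n U \<mu>))"
    using level by (intro dual_bound_le_head_weights) auto
  also have "\<dots> = ereal ((\<Sum>i<k. ln (shifted ! i)) + real (s - k) * ln level)"
    using level t_le_level
    by (simp add: dual_obj_head_weights[OF U] tail_sum log_conj_def ln_div field_simps)
  also have "\<dots> = psi s shifted"
    using level by (simp add: psi_shifted_pos)
  finally show ?thesis .
qed

lemma dual_bound_zero_level:
  assumes U: "orthonormal_mat n U" and level: "level = 0"
  shows "dual_bound n s t U (spectral_mat n U \<mu>) = -\<infinity>"
proof (rule ereal_bot)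
  \<comment> \<open>Without a water level the tail weights can be sent to infinity.\<close>
  fix B :: real
  have "t = 0" and tail: "(\<Sum>i = k..<n. \<mu> i) = 0"
    using level t_le_level t_nonneg tail_sum by auto
  define S where "S = (\<Sum>i<k. ln (shifted ! i))"
  define K where "K = \<bar>B\<bar> + \<bar>S\<bar> + (if 0 < k then 1 / shifted ! (k - 1) else 0)"
  have "0 \<le> (if 0 < k then 1 / shifted ! (k - 1) else 0)"
    using shifted_head_pos[of "k - 1"] by auto
  then have K: "0 \<le> K" "S - (K + 1) \<le> B"
    by (auto simp: K_def)
  have "K \<le> exp K"
    using exp_ge_add_one_self[of K] by linarith
  moreover have "0 < k \<Longrightarrow> 1 / shifted ! (k - 1) \<le> K"
    by (simp add: K_def)
  ultimately have "0 < k \<Longrightarrow> 1 / shifted ! (k - 1) \<le> exp K"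
    by linarith
  moreover have "log_conj t (exp K) = - K - 1"
    using \<open>t = 0\<close> by (simp add: log_conj_def)
  ultimately have bound_K:
    "dual_bound n s t U (spectral_mat n U \<mu>) \<le> ereal (S + real (s - k) * (- K - 1))"
    using dual_bound_le_head_weights[of "exp K" U "spectral_mat n U \<mu>"]
    by (simp add: dual_obj_head_weights[OF U] tail S_def)
  have "real (s - k) * (- K - 1) \<le> 1 * (- K - 1)"
    using K k_less_s by (intro mult_right_mono_neg) auto
  then have "S + real (s - k) * (- K - 1) \<le> S - (K + 1)"
    by simp
  then have "S + real (s - k) * (- K - 1) \<le> B"
    using K(2) by (rule order_trans)
  with bound_K show "dual_bound n s t U (spectral_mat n U \<mu>) \<le> ereal B"
    by (meson ereal_less_eq(3) order_trans)
qed

lemma dual_bound_le_psi: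
  assumes "orthonormal_mat n U"
  shows "dual_bound n s t U (spectral_mat n U \<mu>) \<le> psi s shifted"
  using assms level_nonneg dual_bound_le_psi_pos_level dual_bound_zero_level[of U] by fastforce

definition tail_diag :: "(nat \<Rightarrow> real) \<Rightarrow> nat \<Rightarrow> real" where
  "tail_diag q i = (if i < k then \<mu> i else (level - t) * q i)"

definition tail_mat :: "real mat \<Rightarrow> (nat \<Rightarrow> real) \<Rightarrow> real mat" where
  "tail_mat U q = spectral_mat n U (tail_diag q)"

definition tail_ind :: "nat \<Rightarrow> real" where
  "tail_ind i = (if i < s then 1 else 0)"

lemma psd_tail_mat:
  assumes "U \<in> carrier_mat n n" "\<forall>i\<in>{k..<n}. 0 \<le> q i"
  shows "psd_mat n (tail_mat U q)"
  unfolding tail_mat_def tail_diag_def using assms \<mu>_nonneg t_le_level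
  by (intro psd_mat_spectral_mat) auto

lemma tail_mat_lincomb:
  assumes "U \<in> carrier_mat n n"
  shows "a \<cdot>\<^sub>m tail_mat U q1 + (1 - a) \<cdot>\<^sub>m tail_mat U q2 = tail_mat U (\<lambda>i. a * q1 i + (1 - a) * q2 i)"
  unfolding tail_mat_def spectral_mat_lincomb[OF assms]
  by (rule spectral_mat_cong) (simp add: tail_diag_def algebra_simps)

lemma tail_ind_vertex:
  "tail_ind \<in> hypersimplex {k..<n} (s - k)" "\<forall>i\<in>{k..<n}. tail_ind i = 0 \<or> tail_ind i = 1"
proof -
  have "{k..<n} \<inter> {i. i < s} = {k..<s}"
    using s_le_n by auto
  then show "tail_ind \<in> hypersimplex {k..<n} (s - k)"
    by (simp add: hypersimplex_def tail_ind_def sum.If_cases)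
qed (simp add: tail_ind_def)

lemma mset_tail_diag:
  "mset (map (tail_diag q) [0..<n]) =
    mset (map \<mu> [0..<k]) + image_mset (\<lambda>i. (level - t) * q i) (mset_set {k..<n})"
proof -
  have "[0..<n] = [0..<k] @ [k..<n]"
    using k_less_s s_le_n upt_add_eq_append[of 0 k "n - k"] by simp
  moreover have "map (tail_diag q) [0..<k] = map \<mu> [0..<k]"
    by (simp add: tail_diag_def)
  moreover have "mset (map (tail_diag q) [k..<n]) = image_mset (\<lambda>i. (level - t) * q i) (mset_set {k..<n})"
    by (auto simp: tail_diag_def intro!: image_mset_cong)
  ultimately show ?thesis
    by (simp only: map_append mset_append)
qed

lemma eigvals_tail_mat_vertex:
  assumes U: "orthonormal_mat n U"
    and q: "q \<in> hypersimplex {k..<n} (s - k)" "\<forall>i\<in>{k..<n}. q i = 0 \<or> q i = 1"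
  shows "eigvals (tail_mat U q) = map (tail_diag tail_ind) [0..<n]"
proof -
  have "mset (map (tail_diag q) [0..<n]) = mset (map (tail_diag tail_ind) [0..<n])"
    unfolding mset_tail_diag using image_mset_scaled_01[OF _ q] image_mset_scaled_01[OF _ tail_ind_vertex]
    by simp
  then have "eigvals (tail_mat U q) = eigvals (tail_mat U tail_ind)"
    unfolding tail_mat_def by (rule eigvals_spectral_mat_mset_cong[OF U])
  also have "\<dots> = map (tail_diag tail_ind) [0..<n]"
    unfolding tail_mat_def
  proof (rule eigvals_spectral_mat_antimono[OF U])
    fix i j assume "i \<le> j" "j < n"
    then show "tail_diag tail_ind j \<le> tail_diag tail_ind i"
      using \<mu>_antimono[of i j] level_sub_t_less_mu[of i] t_le_level
      by (auto simp: tail_diag_def tail_ind_def)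
  qed
  finally show ?thesis .
qed

lemma Phi_tail_mat_vertex:
  assumes U: "orthonormal_mat n U"
    and q: "q \<in> hypersimplex {k..<n} (s - k)" "\<forall>i\<in>{k..<n}. q i = 0 \<or> q i = 1"
  shows "Phi s (tail_mat U q) t = psi s shifted"
proof -
  have "Phi s (tail_mat U q) t = (\<Sum>i<s. elog (tail_diag tail_ind i + t))"
    using s_le_n by (simp add: Phi_def eigvals_tail_mat_vertex[OF U q])
  also have "\<dots> = (\<Sum>i<k. elog (tail_diag tail_ind i + t)) + (\<Sum>i = k..<s. elog (tail_diag tail_ind i + t))"
    using k_less_s by (intro sum_lessThan_split) simp
  also have "(\<Sum>i<k. elog (tail_diag tail_ind i + t)) = (\<Sum>i<k. elog (shifted ! i))"
    by (intro sum.cong) (simp_all add: tail_diag_def shifted_head)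
  also have "(\<Sum>i = k..<s. elog (tail_diag tail_ind i + t)) = (\<Sum>i = k..<s. elog level)"
    by (intro sum.cong) (simp_all add: tail_diag_def tail_ind_def)
  also have "(\<Sum>i<k. elog (shifted ! i)) + (\<Sum>i = k..<s. elog level) = psi s shifted"
    by (simp add: psi_shifted sum_const_ereal)
  finally show ?thesis .
qed

lemma psi_le_concave_majorant_tail_mat:
  assumes conc: "concave_on_psd n f" and major: "\<And>Y. psd_mat n Y \<Longrightarrow> Phi s Y t \<le> f Y"
    and U: "orthonormal_mat n U" and q: "q \<in> hypersimplex {k..<n} (s - k)"
  shows "psi s shifted \<le> f (tail_mat U q)"
proof (cases "level = 0")
  case True
  then show ?thesis
    by (simp add: psi_shifted_zero)
next
  case False
  then obtain G where G: "psi s shifted = ereal G"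
    using psi_shifted_pos level_nonneg by force
  have Uc: "U \<in> carrier_mat n n"
    using U by (rule orthonormal_mat_carrier)
  \<comment> \<open>At the vertices \<open>\<Phi>\<^sub>s\<close> already equals \<open>\<psi>\<^sub>s\<close>; concavity carries the bound to convex combinations.\<close>
  have "ereal G \<le> f (tail_mat U q)"
    using finite_atLeastLessThan q
  proof (induction q rule: hypersimplex_induct)
    case (vertex q)
    then have "psd_mat n (tail_mat U q)"
      by (intro psd_tail_mat[OF Uc]) (auto simp: hypersimplex_def)
    then show ?case
      using major Phi_tail_mat_vertex[OF U vertex] G by metis
  next
    case (convex q1 q2 a)
    have "psd_mat n (tail_mat U q1)" "psd_mat n (tail_mat U q2)"
      using convex.hyps(1,2) by (auto intro!: psd_tail_mat[OF Uc] simp: hypersimplex_def)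
    then have "ereal (a * G + (1 - a) * G) \<le> f (a \<cdot>\<^sub>m tail_mat U q1 + (1 - a) \<cdot>\<^sub>m tail_mat U q2)"
      using conc convex.hyps(3,4) convex.IH unfolding concave_on_psd_def by blast
    then show ?case
      by (simp add: tail_mat_lincomb[OF Uc] algebra_simps)
  qed
  with G show ?thesis
    by simp
qed

lemma tail_diag_eq_mu:
  obtains q where "q \<in> hypersimplex {k..<n} (s - k)" "\<And>i. i < n \<Longrightarrow> tail_diag q i = \<mu> i"
proof (cases "0 < level - t")
  case True
  define q where "q i = \<mu> i / (level - t)" for i
  have "q \<in> hypersimplex {k..<n} (s - k)"
    using True mu_le_level_sub_t \<mu>_nonneg k_less_s
    by (auto simp: hypersimplex_def q_def tail_sum sum_divide_distrib[symmetric])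
  moreover have "tail_diag q i = \<mu> i" for i
    using True by (simp add: tail_diag_def q_def)
  ultimately show ?thesis
    using that by blast
next
  case False
  then have "tail_diag tail_ind i = \<mu> i" if "i < n" for i
    using that mu_le_level_sub_t[of i] \<mu>_nonneg[of i] t_le_level by (simp add: tail_diag_def)
  then show ?thesis
    using that tail_ind_vertex(1) by blast
qed

lemma psi_le_concave_majorant:
  assumes "concave_on_psd n f" "\<And>Y. psd_mat n Y \<Longrightarrow> Phi s Y t \<le> f Y" and U: "orthonormal_mat n U"
  shows "psi s shifted \<le> f (spectral_mat n U \<mu>)"
proof -
  obtain q where q: "q \<in> hypersimplex {k..<n} (s - k)" and "\<And>i. i < n \<Longrightarrow> tail_diag q i = \<mu> i"
    using tail_diag_eq_mu by metis
  then have "tail_mat U q = spectral_mat n U \<mu>"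
    unfolding tail_mat_def by (intro spectral_mat_cong)
  with psi_le_concave_majorant_tail_mat[OF assms q] show ?thesis
    by simp
qed

end

theorem proposition2:
  fixes n s :: nat and C X :: "real mat" and t :: real
  assumes "1 \<le> n" and "1 \<le> s" and "s \<le> n"
    and "pd_mat n C"
    and "0 \<le> t" and "t \<le> lambda_min C"
    and "psd_mat n X"
  shows "Phi_hat n s X t = psi s (map2 (\<lambda>a b. a + t * b) (eigvals X) (indic_vec n s))"
proof -
  \<comment> \<open>\<open>C\<close> only bounds \<open>t\<close> in the paper; the identity holds for every \<open>t \<ge> 0\<close>.\<close>
  obtain U \<mu> where U: "orthonormal_mat n U" and X: "X = spectral_mat n U \<mu>"
    and \<mu>_antimono: "\<And>i j. i \<le> j \<Longrightarrow> j < n \<Longrightarrow> \<mu> j \<le> \<mu> i" and eig: "eigvals X = map \<mu> [0..<n]"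
    using spectral_decomposition_sorted \<open>psd_mat n X\<close> unfolding psd_mat_def by metis
  interpret water_filling n s t \<mu>
    using assms \<mu>_antimono psd_mat_spectral_mat_nonneg[of n U \<mu>] U X by unfold_locales auto
  have "map2 (\<lambda>a b. a + t * b) (eigvals X) (indic_vec n s) = shifted"
    by (auto simp: eig indic_vec_def shifted_def intro!: nth_equalityI)
  moreover have "Phi_hat n s X t \<le> dual_bound n s t U X"
    unfolding Phi_hat_def using U \<open>s \<le> n\<close> \<open>0 \<le> t\<close>
    by (intro Inf_lower)
      (blast intro: concave_on_psd_dual_bound orthonormal_mat_carrier Phi_le_dual_bound)
  moreover have "dual_bound n s t U X \<le> psi s shifted"
    unfolding X by (rule dual_bound_le_psi[OF U])
  moreover have "psi s shifted \<le> Phi_hat n s X t"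
    unfolding Phi_hat_def X by (rule Inf_greatest) (auto intro: psi_le_concave_majorant[OF _ _ U])
  ultimately show ?thesis
    by simp
qed

end
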